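(* In every psi-calculus: let $B\subseteq\mathcal N$ be finite with $B\#P$, let $\Psi\rhd P\xrightarrow{\alpha}P'$ with $\alpha\neq\tau$, and let $\mathcal F(P)=(\nu\tilde b_P)\Psi_P$ with $\tilde b_P\#\Psi,P,\mathrm{subj}(\alpha),B$. Then there exists a term $M$ such that $B\#M$ and $\Psi\otimes\Psi_P\vdash M\leftrightarrow\mathrm{subj}(\alpha)$.
   Context: Names: a countably infinite set $\mathcal N$ of atomic names. A nominal set is a set equipped with name swapping operations $(a\;b)\cdot X$ satisfying the usual axioms; the support $\mathrm n(X)$ of an element is the set of names affected by swappings, assumed finite; $a \# X$ ("$a$ fresh for $X$") means $a\notin \mathrm n(X)$, and $A\#X$ for a set/sequence $A$ means every element of $A$ is fresh for $X$. A function/relation is equivariant if it commutes with all swappings. $\tilde a$ denotes a finite sequence of names (also used as the set of its elements). Psi-calculus: given by three nominal datatypes $\mathbf T$ (terms, ranged over by $M,N,K,L$), $\mathbf C$ (conditions, $\varphi$), $\mathbf A$ (assertions, $\Psi$), equivariant operators $\leftrightarrow:\mathbf T\times\mathbf T\to\mathbf C$ (channel equivalence), $\otimes:\mathbf A\times\mathbf A\to\mathbf A$ (composition), $\mathbf 1\in\mathbf A$ (unit), $\vdash\subseteq\mathbf A\times\mathbf C$ (entailment), and equivariant substitution functions $X[\tilde a:=\tilde T]$ (substituting terms for distinct names) on $\mathbf T,\mathbf C,\mathbf A$ satisfying: (S1) if $\tilde a\subseteq\mathrm n(X)$ and $b\in\mathrm n(\tilde T)$ then $b\in\mathrm n(X[\tilde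 a:=\tilde T])$; (S2) if $\tilde b\# X,\tilde a$ then $X[\tilde a:=\tilde T]=((\tilde b\;\tilde a)\cdot X)[\tilde b:=\tilde T]$. Assertions are equivalent, $\Psi\simeq\Psi'$, if for all $\varphi$: $\Psi\vdash\varphi\iff\Psi'\vdash\varphi$. Required: $\Psi\vdash M\leftrightarrow N\Rightarrow\Psi\vdash N\leftrightarrow M$; $\Psi\vdash M\leftrightarrow N\wedge\Psi\vdash N\leftrightarrow L\Rightarrow\Psi\vdash M\leftrightarrow L$; $\Psi\simeq\Psi'\Rightarrow\Psi\otimes\Psi''\simeq\Psi'\otimes\Psi''$; $\Psi\otimes\mathbf 1\simeq\Psi$; $(\Psi\otimes\Psi')\otimes\Psi''\simeq\Psi\otimes(\Psi'\otimes\Psi'')$; $\Psi\otimes\Psi'\simeq\Psi'\otimes\Psi$. Frames: $(\nu\tilde b)\Psi$ with $\tilde b$ binding into $\Psi$, identified up to alpha-equivalence; $(\nu\tilde b_1)\Psi_1\otimes(\nu\tilde b_2)\Psi_2=(\nu\tilde b_1\tilde b_2)(\Psi_1\otimes\Psi_2)$ with $\tilde b_1\#\tilde b_2,\Psi_2$ and $\tilde b_2\#\tilde b_1,\Psi_1$. Agents: $\mathbf 0$; $\overline M N.P$ (output); $\underline M(\lambda\tilde x)N.P$ (input, $\tilde x\subseteq\mathrm n(N)$ without duplicates, binding in $N$ and $P$); $\mathbf{case}\ \varphi_1:P_1\,[\!]\cdots[\!]\,\varphi_n:P_n$; $(\nu a)P$ (binds $a$); $P\mid Q$; $!P$; $(\!|\Psi|\!)$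 (assertion). Agents are identified up to alpha-equivalence. In $!P$ and in each branch $P_i$ of a case, every assertion must occur under an input or output prefix. Substitution on agents is defined homomorphically, avoiding capture. Frame of an agent: $\mathcal F(\mathbf 0)=\mathcal F(\text{input})=\mathcal F(\text{output})=\mathcal F(\mathbf{case}\ldots)=\mathcal F(!P)=\mathbf 1$, $\mathcal F((\!|\Psi|\!))=\Psi$, $\mathcal F(P\mid Q)=\mathcal F(P)\otimes\mathcal F(Q)$, $\mathcal F((\nu b)P)=(\nu b)\mathcal F(P)$. Actions: output $\overline M(\nu\tilde a)N$ with $\tilde a\subseteq\mathrm n(N)$, input $\underline M N$, and $\tau$; $\mathrm{subj}(\overline M(\nu\tilde a)N)=\mathrm{subj}(\underline MN)=M$; $\mathrm{bn}(\overline M(\nu\tilde a)N)=\tilde a$, otherwise $\emptyset$; $\mathrm n(\tau)=\emptyset$, else $\mathrm n(M)\cup\mathrm n(N)$. Transitions $\Psi\rhd P\xrightarrow{\alpha}P'$ are the least relation closed under (symmetric versions of Com and Par included): In: $\Psi\vdash M\leftrightarrow K$ implies $\Psi\rhd\underline M(\lambda\tilde y)N.P\xrightarrow{\underline K\,N[\tilde y:=\tilde L]}P[\tilde y:=\tilde L]$ for any $\tilde L$. Out: $\Psi\vdash M\leftrightarrow K$ implies $\Psi\rhd\overline MN.P\xrightarrow{\overline KN}P$. Case: $\Psi\rhd P_i\xrightarrow\alpha P'$ and $\Psi\vdash\varphi_i$ imply $\Psi\rhd\mathbf{case}\ \tilde\varphi:\tilde P\xrightarrow\alpha P'$. Com: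 with $\mathcal F(P)=(\nu\tilde b_P)\Psi_P$, $\mathcal F(Q)=(\nu\tilde b_Q)\Psi_Q$, $\tilde b_P\#\Psi,\tilde b_Q,Q,M,P$, $\tilde b_Q\#\Psi,\tilde b_P,P,K,Q$: if $\Psi_Q\otimes\Psi\rhd P\xrightarrow{\overline M(\nu\tilde a)N}P'$, $\Psi_P\otimes\Psi\rhd Q\xrightarrow{\underline KN}Q'$, $\Psi\otimes\Psi_P\otimes\Psi_Q\vdash M\leftrightarrow K$ and $\tilde a\#Q$, then $\Psi\rhd P\mid Q\xrightarrow\tau(\nu\tilde a)(P'\mid Q')$. Par: with $\mathcal F(Q)=(\nu\tilde b_Q)\Psi_Q$, $\tilde b_Q\#\Psi,P,\alpha$: if $\Psi_Q\otimes\Psi\rhd P\xrightarrow\alpha P'$ and $\mathrm{bn}(\alpha)\#Q$ then $\Psi\rhd P\mid Q\xrightarrow\alpha P'\mid Q$. Scope: $\Psi\rhd P\xrightarrow\alpha P'$, $b\#\alpha,\Psi$ imply $\Psi\rhd(\nu b)P\xrightarrow\alpha(\nu b)P'$. Open: $\Psi\rhd P\xrightarrow{\overline M(\nu\tilde a)N}P'$, $b\#\tilde a,\Psi,M$, $b\in\mathrm n(N)$ imply $\Psi\rhd(\nu b)P\xrightarrow{\overline M(\nu\tilde a\cup\{b\})N}P'$. Rep: $\Psi\rhd P\mid !P\xrightarrow\alpha P'$ implies $\Psi\rhd !P\xrightarrow\alpha P'$. $\mathrm{bn}(\alpha)$ binds into the object and derivative; transitions are identified up to alpha-equivalence. *)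

theory Defs
  imports Main
begin

section \<open>Names and nominal sets (swapping presentation)\<close>

type_synonym name = nat

definition nswap :: "name \<Rightarrow> name \<Rightarrow> name \<Rightarrow> name" where
  "nswap a b c = (if c = a then b else if c = b then a else c)"

definition supp_of :: "(name \<Rightarrow> name \<Rightarrow> 'x \<Rightarrow> 'x) \<Rightarrow> 'x \<Rightarrow> name set" where
  "supp_of p x = {a. infinite {b. p a b x \<noteq> x}}"

definition nominal :: "(name \<Rightarrow> name \<Rightarrow> 'x \<Rightarrow> 'x) \<Rightarrow> bool" where
  "nominal p \<longleftrightarrow>
     (\<forall>a x. p a a x = x) \<and>
     (\<forall>a b x. p a b (p a b x) = x) \<and>
     (\<forall>a b c d x. p a b (p c d x) = p (nswap a b c) (nswap a b d) (p a b x)) \<and>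
     (\<forall>x. finite (supp_of p x))"

text \<open>Simultaneous swapping (b1 a1)...(bn an) given as a list of pairs.\<close>
fun perm_list :: "(name \<Rightarrow> name \<Rightarrow> 'x \<Rightarrow> 'x) \<Rightarrow> (name \<times> name) list \<Rightarrow> 'x \<Rightarrow> 'x" where
  "perm_list p [] x = x"
| "perm_list p ((a, b) # ps) x = p a b (perm_list p ps x)"

section \<open>Psi-calculus parameters\<close>

record ('t, 'c, 'a) psi =
  permT :: "name \<Rightarrow> name \<Rightarrow> 't \<Rightarrow> 't"
  permC :: "name \<Rightarrow> name \<Rightarrow> 'c \<Rightarrow> 'c"
  permA :: "name \<Rightarrow> name \<Rightarrow> 'a \<Rightarrow> 'a"
  chan_eq :: "'t \<Rightarrow> 't \<Rightarrow> 'c"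
  acomp :: "'a \<Rightarrow> 'a \<Rightarrow> 'a"
  aunit :: "'a"
  entails :: "'a \<Rightarrow> 'c \<Rightarrow> bool"
  substT :: "'t \<Rightarrow> name list \<Rightarrow> 't list \<Rightarrow> 't"
  substC :: "'c \<Rightarrow> name list \<Rightarrow> 't list \<Rightarrow> 'c"
  substA :: "'a \<Rightarrow> name list \<Rightarrow> 't list \<Rightarrow> 'a"

definition suppT :: "('t, 'c, 'a, 'z) psi_scheme \<Rightarrow> 't \<Rightarrow> name set" where
  "suppT C = supp_of (permT C)"
definition suppC :: "('t, 'c, 'a, 'z) psi_scheme \<Rightarrow> 'c \<Rightarrow> name set" where
  "suppC C = supp_of (permC C)"
definition suppA :: "('t, 'c, 'a, 'z) psi_scheme \<Rightarrow> 'a \<Rightarrow> name set" where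
  "suppA C = supp_of (permA C)"

definition suppTs :: "('t, 'c, 'a, 'z) psi_scheme \<Rightarrow> 't list \<Rightarrow> name set" where
  "suppTs C Ts = (\<Union>T\<in>set Ts. suppT C T)"

definition assert_equiv :: "('t, 'c, 'a, 'z) psi_scheme \<Rightarrow> 'a \<Rightarrow> 'a \<Rightarrow> bool" where
  "assert_equiv C \<Psi> \<Psi>' \<longleftrightarrow> (\<forall>\<phi>. entails C \<Psi> \<phi> = entails C \<Psi>' \<phi>)"

text \<open>Substitution axioms (S1), (S2) and equivariance, for one nominal datatype.\<close>
definition subst_ok ::
  "(name \<Rightarrow> name \<Rightarrow> 't \<Rightarrow> 't) \<Rightarrow> (name \<Rightarrow> name \<Rightarrow> 'x \<Rightarrow> 'x) \<Rightarrow> ('x \<Rightarrow> name list \<Rightarrow> 't list \<Rightarrow> 'x) \<Rightarrow> bool" where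
  "subst_ok pt px sb \<longleftrightarrow>
     (\<forall>a b X xs Ts. px a b (sb X xs Ts) = sb (px a b X) (map (nswap a b) xs) (map (pt a b) Ts)) \<and>
     (\<forall>X xs Ts b. distinct xs \<and> length xs = length Ts \<and> set xs \<subseteq> supp_of px X \<and>
          b \<in> (\<Union>T\<in>set Ts. supp_of pt T) \<longrightarrow> b \<in> supp_of px (sb X xs Ts)) \<and>
     (\<forall>X xs Ts bs. distinct xs \<and> length xs = length Ts \<and> distinct bs \<and> length bs = length xs \<and>
          set bs \<inter> (supp_of px X \<union> set xs) = {} \<longrightarrow>
          sb X xs Ts = sb (perm_list px (zip bs xs) X) bs Ts)"

definition psi_calculus :: "('t, 'c, 'a, 'z) psi_scheme \<Rightarrow> bool" where
  "psi_calculus C \<longleftrightarrow>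
     nominal (permT C) \<and> nominal (permC C) \<and> nominal (permA C) \<and>
     \<comment> \<open>equivariance of the operators\<close>
     (\<forall>a b M N. permC C a b (chan_eq C M N) = chan_eq C (permT C a b M) (permT C a b N)) \<and>
     (\<forall>a b \<Psi> \<Psi>'. permA C a b (acomp C \<Psi> \<Psi>') = acomp C (permA C a b \<Psi>) (permA C a b \<Psi>')) \<and>
     (\<forall>a b. permA C a b (aunit C) = aunit C) \<and>
     (\<forall>a b \<Psi> \<phi>. entails C \<Psi> \<phi> = entails C (permA C a b \<Psi>) (permC C a b \<phi>)) \<and>
     subst_ok (permT C) (permT C) (substT C) \<and>
     subst_ok (permT C) (permC C) (substC C) \<and>
     subst_ok (permT C) (permA C) (substA C) \<and>
     \<comment> \<open>requirements on channel equivalence and composition\<close>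
     (\<forall>\<Psi> M N. entails C \<Psi> (chan_eq C M N) \<longrightarrow> entails C \<Psi> (chan_eq C N M)) \<and>
     (\<forall>\<Psi> M N L. entails C \<Psi> (chan_eq C M N) \<and> entails C \<Psi> (chan_eq C N L) \<longrightarrow>
         entails C \<Psi> (chan_eq C M L)) \<and>
     (\<forall>\<Psi> \<Psi>' \<Psi>''. assert_equiv C \<Psi> \<Psi>' \<longrightarrow>
         assert_equiv C (acomp C \<Psi> \<Psi>'') (acomp C \<Psi>' \<Psi>'')) \<and>
     (\<forall>\<Psi>. assert_equiv C (acomp C \<Psi> (aunit C)) \<Psi>) \<and>
     (\<forall>\<Psi> \<Psi>' \<Psi>''. assert_equiv C (acomp C (acomp C \<Psi> \<Psi>') \<Psi>'')
         (acomp C \<Psi> (acomp C \<Psi>' \<Psi>''))) \<and>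
     (\<forall>\<Psi> \<Psi>'. assert_equiv C (acomp C \<Psi> \<Psi>') (acomp C \<Psi>' \<Psi>))"

section \<open>Agents (raw syntax; identified up to alpha-equivalence below)\<close>

datatype ('t, 'c, 'a) agent =
    PNil
  | Outp 't 't "('t, 'c, 'a) agent"
  | Inp 't "name list" 't "('t, 'c, 'a) agent"   \<comment> \<open>\<open>M(\<lambda>xs)N.P\<close>, xs binds in N and P\<close>
  | PCase "('c \<times> ('t, 'c, 'a) agent) list"
  | Res name "('t, 'c, 'a) agent"                 \<comment> \<open>\<open>(\<nu>a)P\<close>, a binds in P\<close>
  | Par "('t, 'c, 'a) agent" "('t, 'c, 'a) agent"
  | Bang "('t, 'c, 'a) agent"
  | Assert 'a

fun perm_agent :: "('t, 'c, 'a, 'z) psi_scheme \<Rightarrow> name \<Rightarrow> name \<Rightarrow> ('t, 'c, 'a) agent \<Rightarrow> ('t, 'c, 'a) agent" where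
  "perm_agent C a b PNil = PNil"
| "perm_agent C a b (Outp M N P) = Outp (permT C a b M) (permT C a b N) (perm_agent C a b P)"
| "perm_agent C a b (Inp M xs N P) =
     Inp (permT C a b M) (map (nswap a b) xs) (permT C a b N) (perm_agent C a b P)"
| "perm_agent C a b (PCase cs) = PCase (map (\<lambda>(\<phi>, P). (permC C a b \<phi>, perm_agent C a b P)) cs)"
| "perm_agent C a b (Res x P) = Res (nswap a b x) (perm_agent C a b P)"
| "perm_agent C a b (Par P Q) = Par (perm_agent C a b P) (perm_agent C a b Q)"
| "perm_agent C a b (Bang P) = Bang (perm_agent C a b P)"
| "perm_agent C a b (Assert \<Psi>) = Assert (permA C a b \<Psi>)"

text \<open>Free names (support of the alpha-equivalence class).\<close>
fun fn :: "('t, 'c, 'a, 'z) psi_scheme \<Rightarrow> ('t, 'c, 'a) agent \<Rightarrow> name set" where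
  "fn C PNil = {}"
| "fn C (Outp M N P) = suppT C M \<union> suppT C N \<union> fn C P"
| "fn C (Inp M xs N P) = suppT C M \<union> ((suppT C N \<union> fn C P) - set xs)"
| "fn C (PCase cs) = (\<Union>(\<phi>, P)\<in>set cs. suppC C \<phi> \<union> fn C P)"
| "fn C (Res x P) = fn C P - {x}"
| "fn C (Par P Q) = fn C P \<union> fn C Q"
| "fn C (Bang P) = fn C P"
| "fn C (Assert \<Psi>) = suppA C \<Psi>"

fun guarded :: "('t, 'c, 'a) agent \<Rightarrow> bool" where
  "guarded PNil = True"
| "guarded (Outp M N P) = True"
| "guarded (Inp M xs N P) = True"
| "guarded (PCase cs) = (\<forall>(\<phi>, P)\<in>set cs. guarded P)"
| "guarded (Res x P) = guarded P"
| "guarded (Par P Q) = (guarded P \<and> guarded Q)"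
| "guarded (Bang P) = guarded P"
| "guarded (Assert \<Psi>) = False"

fun wf_agent :: "('t, 'c, 'a, 'z) psi_scheme \<Rightarrow> ('t, 'c, 'a) agent \<Rightarrow> bool" where
  "wf_agent C PNil = True"
| "wf_agent C (Outp M N P) = wf_agent C P"
| "wf_agent C (Inp M xs N P) = (distinct xs \<and> set xs \<subseteq> suppT C N \<and> wf_agent C P)"
| "wf_agent C (PCase cs) = (\<forall>(\<phi>, P)\<in>set cs. guarded P \<and> wf_agent C P)"
| "wf_agent C (Res x P) = wf_agent C P"
| "wf_agent C (Par P Q) = (wf_agent C P \<and> wf_agent C Q)"
| "wf_agent C (Bang P) = (guarded P \<and> wf_agent C P)"
| "wf_agent C (Assert \<Psi>) = True"

lemma list_all2_case_prod_mono [mono]: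
  "(\<And>a b c d. P a b c d \<longrightarrow> Q a b c d) \<Longrightarrow>
   list_all2 (\<lambda>(a, b) (c, d). P a b c d) xs ys \<longrightarrow> list_all2 (\<lambda>(a, b) (c, d). Q a b c d) xs ys"
  by (auto elim!: list_all2_mono)

inductive alpha :: "('t, 'c, 'a, 'z) psi_scheme \<Rightarrow> ('t, 'c, 'a) agent \<Rightarrow> ('t, 'c, 'a) agent \<Rightarrow> bool"
  for C where
  "alpha C PNil PNil"
| "alpha C P Q \<Longrightarrow> alpha C (Outp M N P) (Outp M N Q)"
| "length ys = length xs \<Longrightarrow> length cs = length xs \<Longrightarrow> distinct cs \<Longrightarrow>
   set cs \<inter> (set xs \<union> set ys \<union> fn C (Inp M xs N P) \<union> fn C (Inp M ys N' Q)) = {} \<Longrightarrow>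
   perm_list (permT C) (zip cs xs) N = perm_list (permT C) (zip cs ys) N' \<Longrightarrow>
   alpha C (perm_list (perm_agent C) (zip cs xs) P) (perm_list (perm_agent C) (zip cs ys) Q) \<Longrightarrow>
   alpha C (Inp M xs N P) (Inp M ys N' Q)"
| "list_all2 (\<lambda>(\<phi>, P) (\<phi>', Q). \<phi> = \<phi>' \<and> alpha C P Q) cs ds \<Longrightarrow> alpha C (PCase cs) (PCase ds)"
| "c \<notin> {a, b} \<union> fn C (Res a P) \<union> fn C (Res b Q) \<Longrightarrow>
   alpha C (perm_agent C a c P) (perm_agent C b c Q) \<Longrightarrow> alpha C (Res a P) (Res b Q)"
| "alpha C P P' \<Longrightarrow> alpha C Q Q' \<Longrightarrow> alpha C (Par P Q) (Par P' Q')"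
| "alpha C P Q \<Longrightarrow> alpha C (Bang P) (Bang Q)"
| "alpha C (Assert \<Psi>) (Assert \<Psi>)"

text \<open>Capture-avoiding simultaneous substitution on agents, as a relation up to alpha.\<close>
inductive subst_agent :: "('t, 'c, 'a, 'z) psi_scheme \<Rightarrow> ('t, 'c, 'a) agent \<Rightarrow> name list \<Rightarrow> 't list \<Rightarrow>
    ('t, 'c, 'a) agent \<Rightarrow> bool" for C where
  "subst_agent C PNil ys Ls PNil"
| "subst_agent C P ys Ls P' \<Longrightarrow>
   subst_agent C (Outp M N P) ys Ls (Outp (substT C M ys Ls) (substT C N ys Ls) P')"
| "set xs \<inter> (set ys \<union> suppTs C Ls) = {} \<Longrightarrow> subst_agent C P ys Ls P' \<Longrightarrow>
   subst_agent C (Inp M xs N P) ys Ls (Inp (substT C M ys Ls) xs (substT C N ys Ls) P')"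
| "list_all2 (\<lambda>(\<phi>, P) (\<phi>', P'). \<phi>' = substC C \<phi> ys Ls \<and> subst_agent C P ys Ls P') cs ds \<Longrightarrow>
   subst_agent C (PCase cs) ys Ls (PCase ds)"
| "x \<notin> set ys \<union> suppTs C Ls \<Longrightarrow> subst_agent C P ys Ls P' \<Longrightarrow>
   subst_agent C (Res x P) ys Ls (Res x P')"
| "subst_agent C P ys Ls P' \<Longrightarrow> subst_agent C Q ys Ls Q' \<Longrightarrow>
   subst_agent C (Par P Q) ys Ls (Par P' Q')"
| "subst_agent C P ys Ls P' \<Longrightarrow> subst_agent C (Bang P) ys Ls (Bang P')"
| "subst_agent C (Assert \<Psi>) ys Ls (Assert (substA C \<Psi> ys Ls))"
| "alpha C P P1 \<Longrightarrow> subst_agent C P1 ys Ls Q1 \<Longrightarrow> alpha C Q1 Q \<Longrightarrow> subst_agent C P ys Ls Q"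

section \<open>Frames\<close>

text \<open>A frame \<open>(\<nu>bs)\<Psi>\<close> is represented by the pair (bs, \<Psi>); bs binds (nested, left to right) in \<Psi>.\<close>
definition frame_fn :: "('t, 'c, 'a, 'z) psi_scheme \<Rightarrow> name list \<times> 'a \<Rightarrow> name set" where
  "frame_fn C F = suppA C (snd F) - set (fst F)"

inductive frame_alpha :: "('t, 'c, 'a, 'z) psi_scheme \<Rightarrow> name list \<times> 'a \<Rightarrow> name list \<times> 'a \<Rightarrow> bool"
  for C where
  "frame_alpha C ([], \<Psi>) ([], \<Psi>)"
| "c \<notin> {a, b} \<union> frame_fn C (a # as, \<Psi>) \<union> frame_fn C (b # bs, \<Psi>') \<Longrightarrow>
   frame_alpha C (map (nswap a c) as, permA C a c \<Psi>) (map (nswap b c) bs, permA C b c \<Psi>') \<Longrightarrow>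
   frame_alpha C (a # as, \<Psi>) (b # bs, \<Psi>')"

text \<open>\<open>has_frame C P bs \<Psi>\<close>: the frame \<open>\<F>(P)\<close> equals \<open>(\<nu>bs)\<Psi>\<close> (up to alpha).\<close>
inductive has_frame :: "('t, 'c, 'a, 'z) psi_scheme \<Rightarrow> ('t, 'c, 'a) agent \<Rightarrow> name list \<Rightarrow> 'a \<Rightarrow> bool"
  for C where
  "has_frame C PNil [] (aunit C)"
| "has_frame C (Outp M N P) [] (aunit C)"
| "has_frame C (Inp M xs N P) [] (aunit C)"
| "has_frame C (PCase cs) [] (aunit C)"
| "has_frame C (Bang P) [] (aunit C)"
| "has_frame C (Assert \<Psi>) [] \<Psi>"
| "has_frame C P bP \<Psi>P \<Longrightarrow> has_frame C Q bQ \<Psi>Q \<Longrightarrow>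
   set bP \<inter> (set bQ \<union> suppA C \<Psi>Q) = {} \<Longrightarrow> set bQ \<inter> (set bP \<union> suppA C \<Psi>P) = {} \<Longrightarrow>
   has_frame C (Par P Q) (bP @ bQ) (acomp C \<Psi>P \<Psi>Q)"
| "has_frame C P bs \<Psi> \<Longrightarrow> has_frame C (Res b P) (b # bs) \<Psi>"
| "has_frame C P bs \<Psi> \<Longrightarrow> frame_alpha C (bs, \<Psi>) (bs', \<Psi>') \<Longrightarrow> has_frame C P bs' \<Psi>'"

section \<open>Actions and transitions\<close>

datatype 't action =
    OutAct 't "name list" 't   \<comment> \<open>\<open>\<bar>M(\<nu>as)N\<close>; as binds into N and the derivative\<close>
  | InAct 't 't
  | Tau

fun subj :: "'t action \<Rightarrow> 't" where
  "subj (OutAct M as N) = M"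
| "subj (InAct M N) = M"

fun bn :: "'t action \<Rightarrow> name list" where
  "bn (OutAct M as N) = as"
| "bn (InAct M N) = []"
| "bn Tau = []"

fun names_act :: "('t, 'c, 'a, 'z) psi_scheme \<Rightarrow> 't action \<Rightarrow> name set" where
  "names_act C (OutAct M as N) = suppT C M \<union> suppT C N"
| "names_act C (InAct M N) = suppT C M \<union> suppT C N"
| "names_act C Tau = {}"

fun res_chain :: "name list \<Rightarrow> ('t, 'c, 'a) agent \<Rightarrow> ('t, 'c, 'a) agent" where
  "res_chain [] P = P"
| "res_chain (a # as) P = Res a (res_chain as P)"

definition bres_fn :: "('t, 'c, 'a, 'z) psi_scheme \<Rightarrow> name list \<times> 't \<times> ('t, 'c, 'a) agent \<Rightarrow> name set" where
  "bres_fn C R = (case R of (as, N, P) \<Rightarrow> (suppT C N \<union> fn C P) - set as)"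

inductive bres_alpha :: "('t, 'c, 'a, 'z) psi_scheme \<Rightarrow> name list \<times> 't \<times> ('t, 'c, 'a) agent \<Rightarrow>
    name list \<times> 't \<times> ('t, 'c, 'a) agent \<Rightarrow> bool" for C where
  "alpha C P Q \<Longrightarrow> bres_alpha C ([], N, P) ([], N, Q)"
| "c \<notin> {a, b} \<union> bres_fn C (a # as, N, P) \<union> bres_fn C (b # bs, N', Q) \<Longrightarrow>
   bres_alpha C (map (nswap a c) as, permT C a c N, perm_agent C a c P)
                (map (nswap b c) bs, permT C b c N', perm_agent C b c Q) \<Longrightarrow>
   bres_alpha C (a # as, N, P) (b # bs, N', Q)"

fun res_alpha :: "('t, 'c, 'a, 'z) psi_scheme \<Rightarrow> 't action \<times> ('t, 'c, 'a) agent \<Rightarrow>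
    't action \<times> ('t, 'c, 'a) agent \<Rightarrow> bool" where
  "res_alpha C (OutAct M as N, P) (OutAct M' bs N', Q) = (M = M' \<and> bres_alpha C (as, N, P) (bs, N', Q))"
| "res_alpha C (InAct M N, P) (InAct M' N', Q) = (M = M' \<and> N = N' \<and> alpha C P Q)"
| "res_alpha C (Tau, P) (Tau, Q) = alpha C P Q"
| "res_alpha C _ _ = False"

inductive transition :: "('t, 'c, 'a, 'z) psi_scheme \<Rightarrow> 'a \<Rightarrow> ('t, 'c, 'a) agent \<Rightarrow> 't action \<Rightarrow>
    ('t, 'c, 'a) agent \<Rightarrow> bool" for C where
  In: "entails C \<Psi> (chan_eq C M K) \<Longrightarrow> length Ls = length ys \<Longrightarrow> subst_agent C P ys Ls P' \<Longrightarrow>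
   transition C \<Psi> (Inp M ys N P) (InAct K (substT C N ys Ls)) P'"
| Out: "entails C \<Psi> (chan_eq C M K) \<Longrightarrow> transition C \<Psi> (Outp M N P) (OutAct K [] N) P"
| Case: "(\<phi>, P) \<in> set cs \<Longrightarrow> transition C \<Psi> P \<alpha> P' \<Longrightarrow> entails C \<Psi> \<phi> \<Longrightarrow> transition C \<Psi> (PCase cs) \<alpha> P'"
| Com1: "has_frame C P bP \<Psi>P \<Longrightarrow> has_frame C Q bQ \<Psi>Q \<Longrightarrow>
   set bP \<inter> (suppA C \<Psi> \<union> set bQ \<union> fn C Q \<union> suppT C M \<union> fn C P) = {} \<Longrightarrow>
   set bQ \<inter> (suppA C \<Psi> \<union> set bP \<union> fn C P \<union> suppT C K \<union> fn C Q) = {} \<Longrightarrow>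
   transition C (acomp C \<Psi>Q \<Psi>) P (OutAct M as N) P' \<Longrightarrow>
   transition C (acomp C \<Psi>P \<Psi>) Q (InAct K N) Q' \<Longrightarrow>
   entails C (acomp C (acomp C \<Psi> \<Psi>P) \<Psi>Q) (chan_eq C M K) \<Longrightarrow>
   set as \<inter> fn C Q = {} \<Longrightarrow>
   transition C \<Psi> (Par P Q) Tau (res_chain as (Par P' Q'))"
| Com2: "has_frame C P bP \<Psi>P \<Longrightarrow> has_frame C Q bQ \<Psi>Q \<Longrightarrow>
   set bQ \<inter> (suppA C \<Psi> \<union> set bP \<union> fn C P \<union> suppT C M \<union> fn C Q) = {} \<Longrightarrow>
   set bP \<inter> (suppA C \<Psi> \<union> set bQ \<union> fn C Q \<union> suppT C K \<union> fn C P) = {} \<Longrightarrow>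
   transition C (acomp C \<Psi>P \<Psi>) Q (OutAct M as N) Q' \<Longrightarrow>
   transition C (acomp C \<Psi>Q \<Psi>) P (InAct K N) P' \<Longrightarrow>
   entails C (acomp C (acomp C \<Psi> \<Psi>Q) \<Psi>P) (chan_eq C M K) \<Longrightarrow>
   set as \<inter> fn C P = {} \<Longrightarrow>
   transition C \<Psi> (Par P Q) Tau (res_chain as (Par P' Q'))"
| Par1: "has_frame C Q bQ \<Psi>Q \<Longrightarrow> set bQ \<inter> (suppA C \<Psi> \<union> fn C P \<union> names_act C \<alpha>) = {} \<Longrightarrow>
   transition C (acomp C \<Psi>Q \<Psi>) P \<alpha> P' \<Longrightarrow> set (bn \<alpha>) \<inter> fn C Q = {} \<Longrightarrow>
   transition C \<Psi> (Par P Q) \<alpha> (Par P' Q)"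
| Par2: "has_frame C P bP \<Psi>P \<Longrightarrow> set bP \<inter> (suppA C \<Psi> \<union> fn C Q \<union> names_act C \<alpha>) = {} \<Longrightarrow>
   transition C (acomp C \<Psi>P \<Psi>) Q \<alpha> Q' \<Longrightarrow> set (bn \<alpha>) \<inter> fn C P = {} \<Longrightarrow>
   transition C \<Psi> (Par P Q) \<alpha> (Par P Q')"
| Scope: "transition C \<Psi> P \<alpha> P' \<Longrightarrow> b \<notin> names_act C \<alpha> \<union> suppA C \<Psi> \<Longrightarrow>
   transition C \<Psi> (Res b P) \<alpha> (Res b P')"
| Open: "transition C \<Psi> P (OutAct M (as1 @ as2) N) P' \<Longrightarrow>
   b \<notin> set as1 \<union> set as2 \<union> suppA C \<Psi> \<union> suppT C M \<Longrightarrow> b \<in> suppT C N \<Longrightarrow>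
   transition C \<Psi> (Res b P) (OutAct M (as1 @ b # as2) N) P'"
| Rep: "transition C \<Psi> (Par P (Bang P)) \<alpha> P' \<Longrightarrow> transition C \<Psi> (Bang P) \<alpha> P'"
| Alpha: "alpha C P P1 \<Longrightarrow> transition C \<Psi> P1 \<alpha>1 P1' \<Longrightarrow> res_alpha C (\<alpha>1, P1') (\<alpha>, P') \<Longrightarrow>
   transition C \<Psi> P \<alpha> P'"

end

theory Submission
  imports Defs
begin

text \<open>
  Write fresh_chan \<Psi> K B A for "\<exists>M. B # M \<and> \<Psi> \<otimes> A \<turnstile> M \<leftrightarrow> K".  The proof is an induction on
  the transition (transition_fresh_subject) with one lemma per rule.  Since the rules fix
  frames only up to alpha-equivalence, the induction hypothesis must cover every frame whose
  binders avoid the environment (\<Psi>, K, B).  This rests on frame invariance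
  (frame_invariant): for two such frames of one agent, fresh_chan holds for one iff it holds
  for the other.  Its proof uses equivariance of fresh_chan and the fact that the environment
  can be renamed away from names that do not occur in the assertions (fresh_chan_rename_env).
\<close>

section \<open>Swapping names\<close>

lemma nswap_nswap [simp]: "nswap a b (nswap a b n) = n"
  by (auto simp: nswap_def)

lemma nswap_other [simp]: "n \<noteq> a \<Longrightarrow> n \<noteq> b \<Longrightarrow> nswap a b n = n"
  by (auto simp: nswap_def)

lemma nswap_left [simp]: "nswap a b a = b"
  and nswap_right [simp]: "nswap a b b = a"
  by (auto simp: nswap_def)

lemma nswap_inj: "(nswap a b x = nswap a b y) = (x = y)"
  by (metis nswap_nswap)

lemma nswap_comp: "nswap x y (nswap a c n) = nswap (nswap x y a) (nswap x y c) (nswap x y n)"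
  by (auto simp: nswap_def)

lemma nswap_commute: "{a, c} \<inter> {x, d} = {} \<Longrightarrow> nswap a c (nswap x d n) = nswap x d (nswap a c n)"
  by (auto simp: nswap_def)

lemma nswap_image_inter: "nswap a b ` X \<inter> nswap a b ` Y = nswap a b ` (X \<inter> Y)"
  by (auto simp: nswap_inj)

lemma nswap_image_diff: "nswap a b ` X - nswap a b ` Y = nswap a b ` (X - Y)"
  by (auto simp: nswap_inj)

lemma mem_nswap_image: "(d \<in> nswap a b ` S) = (nswap a b d \<in> S)"
  by (metis image_iff nswap_nswap)

lemma nswap_in_image: "(nswap a b x \<in> nswap a b ` X) = (x \<in> X)"
  by (auto simp: nswap_inj)

lemma nswap_image_fresh: "a \<notin> X \<Longrightarrow> b \<notin> X \<Longrightarrow> nswap a b ` X = X"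
  by (force simp: nswap_def)

lemma nswap_image_replace: "x \<in> S \<Longrightarrow> d \<notin> S \<Longrightarrow> nswap x d ` S = insert d (S - {x})"
  by (auto simp: nswap_def image_iff)

lemma nswap_comp_self [simp]: "nswap a b \<circ> nswap a b = id"
  by (auto simp: fun_eq_iff)

lemma map_nswap_nswap [simp]: "map (nswap a b) (map (nswap a b) xs) = xs"
  by (induct xs) auto

lemma disjoint_nswap_image: "a \<notin> E \<Longrightarrow> c \<notin> E \<Longrightarrow> E \<inter> X = {} \<Longrightarrow> E \<inter> nswap a c ` X = {}"
  by (auto simp: nswap_def split: if_splits)

lemma obtain_fresh: "finite (X :: name set) \<Longrightarrow> (\<And>d. d \<notin> X \<Longrightarrow> thesis) \<Longrightarrow> thesis"
  by (meson ex_new_if_finite infinite_UNIV_nat)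

text \<open>If swapping a, c on S and b, c on S' gives the same set, with c fresh, then S and S'
  agree away from a and b.  This is how free names are shown invariant under alpha-conversion.\<close>
lemma swap_image_eq_diff:
  assumes eq: "nswap a c ` S = nswap b c ` S'" and "c \<noteq> a" "c \<noteq> b"
    and "c \<notin> S - {a}" "c \<notin> S' - {b}"
  shows "S - {a} = S' - {b}"
proof -
  have sub: "T - {x} \<subseteq> T' - {y}"
    if "nswap x c ` T = nswap y c ` T'" "c \<noteq> x" "c \<noteq> y" "c \<notin> T - {x}" "c \<notin> T' - {y}"
    for x y T T'
  proof
    fix n assume n: "n \<in> T - {x}"
    then have "n \<noteq> c" using that by auto
    then have "n \<in> nswap y c ` T'" using that(1) n by (metis DiffD1 image_eqI nswap_other DiffD2 singletonI)
    then have "nswap y c n \<in> T'" by (simp add: mem_nswap_image)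
    then show "n \<in> T' - {y}" using that \<open>n \<noteq> c\<close> by (cases "n = y") auto
  qed
  show ?thesis
    using sub[OF assms(1-5)] sub[OF assms(1)[symmetric] assms(3,2,5,4)] by blast
qed

section \<open>Nominal sets\<close>

context
  fixes p :: "name \<Rightarrow> name \<Rightarrow> 'x \<Rightarrow> 'x"
  assumes nom: "nominal p"
begin

lemma nom_id [simp]: "p a a x = x"
  using nom by (simp add: nominal_def)

lemma nom_inv [simp]: "p a b (p a b x) = x"
  using nom by (simp add: nominal_def)

lemma nom_comp: "p a b (p c d x) = p (nswap a b c) (nswap a b d) (p a b x)"
  using nom by (simp add: nominal_def)

lemma nom_finite_supp [simp]: "finite (supp_of p x)"
  using nom by (simp add: nominal_def)

lemma nom_sym: "p a b x = p b a x"
proof -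
  have "p a b (p a b y) = p b a (p a b y)" for y
    using nom_comp[of a b a b] by simp
  from this[of "p a b x"] show ?thesis by simp
qed

lemma nom_inj: "(p a b x = p a b y) = (x = y)"
  by (metis nom_inv)

lemma nom_fresh:
  assumes "a \<notin> supp_of p x" "b \<notin> supp_of p x"
  shows "p a b x = x"
proof (cases "a = b")
  case False
  have "finite ({c. p a c x \<noteq> x} \<union> {c. p b c x \<noteq> x} \<union> {a, b})"
    using assms by (simp add: supp_of_def)
  then obtain c where c: "c \<notin> {c. p a c x \<noteq> x} \<union> {c. p b c x \<noteq> x} \<union> {a, b}"
    by (rule obtain_fresh)
  have "p a c (p b c (p a c x)) = p (nswap a c b) (nswap a c c) (p a c (p a c x))"
    by (rule nom_comp)
  then have "p b a x = x" using c False by simp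
  then show ?thesis by (metis nom_sym)
qed simp

lemma nom_supp_swap: "supp_of p (p a b x) = nswap a b ` supp_of p x"
proof -
  have "p e d (p a b x) = p a b (p (nswap a b e) (nswap a b d) x)" for e d
    using nom_comp[of a b] by simp
  then have "{d. p e d (p a b x) \<noteq> p a b x} = nswap a b ` {d. p (nswap a b e) d x \<noteq> x}" for e
    by (auto simp: nom_inj mem_nswap_image)
  then have "e \<in> supp_of p (p a b x) \<longleftrightarrow> nswap a b e \<in> supp_of p x" for e
    by (simp add: supp_of_def finite_image_iff inj_on_def nswap_inj)
  then show ?thesis
    by (simp add: set_eq_iff mem_nswap_image)
qed

lemma nom_comm_swap: "a \<notin> {x, y} \<Longrightarrow> c \<notin> {x, y} \<Longrightarrow> p a c (p x y X) = p x y (p a c X)"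
  using nom_comp[of a c x y X] by simp

end

lemma supp_equivariant_binop:
  assumes "\<forall>a b x y. p3 a b (f x y) = f (p1 a b x) (p2 a b y)"
  shows "supp_of p3 (f x y) \<subseteq> supp_of p1 x \<union> supp_of p2 y"
proof
  fix a assume a: "a \<in> supp_of p3 (f x y)"
  have "{b. p3 a b (f x y) \<noteq> f x y} \<subseteq> {b. p1 a b x \<noteq> x} \<union> {b. p2 a b y \<noteq> y}"
    using assms by auto
  with a show "a \<in> supp_of p1 x \<union> supp_of p2 y"
    by (auto simp: supp_of_def dest: finite_subset)
qed

section \<open>Consequences of the psi-calculus axioms\<close>

locale psi =
  fixes C :: "('t, 'c, 'a, 'z) psi_scheme"
  assumes psi: "psi_calculus C"
begin

lemma nomT: "nominal (permT C)" and nomC: "nominal (permC C)" and nomA: "nominal (permA C)"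
  using psi by (simp_all add: psi_calculus_def)

lemma eqv_chan: "permC C a b (chan_eq C M N) = chan_eq C (permT C a b M) (permT C a b N)"
  using psi by (simp add: psi_calculus_def)

lemma eqv_comp: "permA C a b (acomp C X Y) = acomp C (permA C a b X) (permA C a b Y)"
  using psi by (simp add: psi_calculus_def)

lemma eqv_unit [simp]: "permA C a b (aunit C) = aunit C"
  using psi by (simp add: psi_calculus_def)

lemma eqv_ent: "entails C \<Psi> \<phi> = entails C (permA C a b \<Psi>) (permC C a b \<phi>)"
  using psi unfolding psi_calculus_def by blast

lemma ae_congr: "assert_equiv C X Y \<Longrightarrow> assert_equiv C (acomp C X Z) (acomp C Y Z)"
  using psi unfolding psi_calculus_def by blast

lemma ae_unit: "assert_equiv C (acomp C X (aunit C)) X"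
  using psi unfolding psi_calculus_def by blast

lemma ae_assoc: "assert_equiv C (acomp C (acomp C X Y) Z) (acomp C X (acomp C Y Z))"
  using psi unfolding psi_calculus_def by blast

lemma ae_comm: "assert_equiv C (acomp C X Y) (acomp C Y X)"
  using psi unfolding psi_calculus_def by blast

lemma ae_sym: "assert_equiv C X Y \<Longrightarrow> assert_equiv C Y X"
  by (simp add: assert_equiv_def)

lemma ae_trans: "assert_equiv C X Y \<Longrightarrow> assert_equiv C Y Z \<Longrightarrow> assert_equiv C X Z"
  by (simp add: assert_equiv_def)

lemma ae_ent: "assert_equiv C X Y \<Longrightarrow> entails C X \<phi> \<Longrightarrow> entails C Y \<phi>"
  by (simp add: assert_equiv_def)

lemma ae_congr_r: "assert_equiv C Y Z \<Longrightarrow> assert_equiv C (acomp C X Y) (acomp C X Z)"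
  by (meson ae_comm ae_congr ae_trans)

lemmas permT_inv [simp] = nom_inv[OF nomT]
  and permA_inv [simp] = nom_inv[OF nomA]
  and permC_inv [simp] = nom_inv[OF nomC]
  and finite_suppT [simp] = nom_finite_supp[OF nomT, folded suppT_def]
  and finite_suppA [simp] = nom_finite_supp[OF nomA, folded suppA_def]
  and finite_suppC [simp] = nom_finite_supp[OF nomC, folded suppC_def]
  and suppT_swap = nom_supp_swap[OF nomT, folded suppT_def]
  and suppA_swap = nom_supp_swap[OF nomA, folded suppA_def]
  and suppC_swap = nom_supp_swap[OF nomC, folded suppC_def]
  and permT_fresh = nom_fresh[OF nomT, folded suppT_def]
  and permA_fresh = nom_fresh[OF nomA, folded suppA_def]
  and permA_comp = nom_comp[OF nomA]

lemma suppA_comp: "suppA C (acomp C X Y) \<subseteq> suppA C X \<union> suppA C Y"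
  unfolding suppA_def by (rule supp_equivariant_binop) (simp add: eqv_comp)

lemma suppA_unit [simp]: "suppA C (aunit C) = {}"
  by (simp add: suppA_def supp_of_def)

lemma ent_swap: "entails C X \<phi> \<Longrightarrow> entails C (permA C a b X) (permC C a b \<phi>)"
  using eqv_ent by blast

lemma ae_unit_swap: "assert_equiv C X (aunit C) \<Longrightarrow> assert_equiv C (permA C a b X) (aunit C)"
  unfolding assert_equiv_def
proof
  fix \<phi> assume unit: "\<forall>\<phi>. entails C X \<phi> = entails C (aunit C) \<phi>"
  have "entails C (permA C a b X) \<phi> = entails C X (permC C a b \<phi>)"
    using eqv_ent[of "permA C a b X" \<phi> a b] by simp
  also have "\<dots> = entails C (aunit C) (permC C a b \<phi>)" using unit by simp
  also have "\<dots> = entails C (aunit C) \<phi>"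
    using eqv_ent[of "aunit C" "permC C a b \<phi>" a b] by simp
  finally show "entails C (permA C a b X) \<phi> = entails C (aunit C) \<phi>" .
qed

end

section \<open>Channel witnesses fresh for a set of names\<close>

definition fresh_chan :: "('t, 'c, 'a, 'z) psi_scheme \<Rightarrow> 'a \<Rightarrow> 't \<Rightarrow> name set \<Rightarrow> 'a \<Rightarrow> bool" where
  "fresh_chan C \<Psi> K B A \<longleftrightarrow> (\<exists>M. suppT C M \<inter> B = {} \<and> entails C (acomp C \<Psi> A) (chan_eq C M K))"

text \<open>The names of the environment (\<Psi>, K, B) of fresh_chan: the binders of a frame have to
  avoid them.\<close>
definition env_names :: "('t, 'c, 'a, 'z) psi_scheme \<Rightarrow> 'a \<Rightarrow> 't \<Rightarrow> name set \<Rightarrow> name set" where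
  "env_names C \<Psi> K B = suppA C \<Psi> \<union> suppT C K \<union> B"

context psi
begin

lemma finite_env_names: "finite B \<Longrightarrow> finite (env_names C \<Psi> K B)"
  by (simp add: env_names_def)

lemma env_names_comp: "env_names C (acomp C \<Psi> A) K B \<subseteq> env_names C \<Psi> K B \<union> suppA C A"
  using suppA_comp[of \<Psi> A] by (auto simp: env_names_def)

lemma env_names_swap:
  "env_names C (permA C x y \<Psi>) (permT C x y K) (nswap x y ` B) = nswap x y ` env_names C \<Psi> K B"
  by (simp add: env_names_def suppA_swap suppT_swap image_Un)

lemma fresh_chan_ae_frame: "assert_equiv C A A' \<Longrightarrow> fresh_chan C \<Psi> K B A \<Longrightarrow> fresh_chan C \<Psi> K B A'"
  unfolding fresh_chan_def by (meson ae_congr_r ae_ent)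

lemma fresh_chan_ae_env: "assert_equiv C \<Psi> \<Psi>' \<Longrightarrow> fresh_chan C \<Psi> K B A \<Longrightarrow> fresh_chan C \<Psi>' K B A"
  unfolding fresh_chan_def by (meson ae_congr ae_ent)

lemma fresh_chan_comp_left:
  "fresh_chan C \<Psi> K B (acomp C A1 A2) = fresh_chan C (acomp C \<Psi> A2) K B A1"
proof -
  have "assert_equiv C (acomp C \<Psi> (acomp C A1 A2)) (acomp C (acomp C \<Psi> A2) A1)"
    by (meson ae_assoc ae_comm ae_congr_r ae_sym ae_trans)
  then show ?thesis unfolding fresh_chan_def by (meson ae_ent ae_sym)
qed

lemma fresh_chan_comp_right:
  "fresh_chan C \<Psi> K B (acomp C A1 A2) = fresh_chan C (acomp C \<Psi> A1) K B A2"
proof -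
  have "assert_equiv C (acomp C \<Psi> (acomp C A1 A2)) (acomp C (acomp C \<Psi> A1) A2)"
    by (meson ae_assoc ae_sym)
  then show ?thesis unfolding fresh_chan_def by (meson ae_ent ae_sym)
qed

lemma fresh_chan_swap:
  assumes "fresh_chan C \<Psi> K B A"
  shows "fresh_chan C (permA C x y \<Psi>) (permT C x y K) (nswap x y ` B) (permA C x y A)"
proof -
  obtain M where M: "suppT C M \<inter> B = {}" "entails C (acomp C \<Psi> A) (chan_eq C M K)"
    using assms unfolding fresh_chan_def by blast
  have "suppT C (permT C x y M) \<inter> nswap x y ` B = {}"
    using M(1) by (simp add: suppT_swap nswap_image_inter)
  moreover have "entails C (acomp C (permA C x y \<Psi>) (permA C x y A))
      (chan_eq C (permT C x y M) (permT C x y K))"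
    using ent_swap[OF M(2), of x y] by (simp add: eqv_comp eqv_chan)
  ultimately show ?thesis unfolding fresh_chan_def by blast
qed

lemma fresh_chan_swap_iff:
  "fresh_chan C \<Psi> K B A =
   fresh_chan C (permA C x y \<Psi>) (permT C x y K) (nswap x y ` B) (permA C x y A)"
  using fresh_chan_swap[of "permA C x y \<Psi>" "permT C x y K" "nswap x y ` B" "permA C x y A" x y]
    fresh_chan_swap
  by (auto simp: image_image)

text \<open>One name at a time is swapped with a fresh one.\<close>
lemma fresh_chan_rename_env:
  assumes "finite Z" "finite W" "finite B" "env_names C \<Psi> K B \<inter> W = {}"
    and "\<forall>z \<in> Z \<inter> env_names C \<Psi> K B. z \<notin> suppA C A1 \<and> z \<notin> suppA C A2"
  shows "\<exists>\<Psi>' K' B'. finite B' \<and> env_names C \<Psi>' K' B' \<inter> (Z \<union> W) = {} \<and>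
     fresh_chan C \<Psi> K B A1 = fresh_chan C \<Psi>' K' B' A1 \<and>
     fresh_chan C \<Psi> K B A2 = fresh_chan C \<Psi>' K' B' A2"
  using assms(3-5)
proof (induction "card (Z \<inter> env_names C \<Psi> K B)" arbitrary: \<Psi> K B rule: less_induct)
  case less
  show ?case
  proof (cases "Z \<inter> env_names C \<Psi> K B = {}")
    case True
    then show ?thesis using less.prems by blast
  next
    case False
    then obtain z where z: "z \<in> Z \<inter> env_names C \<Psi> K B" by blast
    obtain d where d: "d \<notin> suppA C A1 \<union> suppA C A2 \<union> Z \<union> W \<union> env_names C \<Psi> K B"
      using assms(1,2) less.prems(1) finite_env_names by (metis finite_Un finite_suppA obtain_fresh)
    let ?\<Psi> = "permA C z d \<Psi>" and ?K = "permT C z d K" and ?B = "nswap z d ` B"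
    have A12: "permA C z d A1 = A1" "permA C z d A2 = A2"
      using z d less.prems(3) by (auto intro: permA_fresh)
    have env: "env_names C ?\<Psi> ?K ?B = insert d (env_names C \<Psi> K B - {z})"
      unfolding env_names_swap using z d by (intro nswap_image_replace) auto
    have "Z \<inter> env_names C ?\<Psi> ?K ?B = (Z \<inter> env_names C \<Psi> K B) - {z}"
      unfolding env using d by auto
    then have smaller: "card (Z \<inter> env_names C ?\<Psi> ?K ?B) < card (Z \<inter> env_names C \<Psi> K B)"
      using z assms(1) by (metis card_Diff1_less finite_Int)
    have "finite ?B" "env_names C ?\<Psi> ?K ?B \<inter> W = {}"
        "\<forall>z' \<in> Z \<inter> env_names C ?\<Psi> ?K ?B. z' \<notin> suppA C A1 \<and> z' \<notin> suppA C A2"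
      unfolding env using d less.prems by auto
    from less.hyps[OF smaller this] show ?thesis
      using fresh_chan_swap_iff[of \<Psi> K B A1 z d] fresh_chan_swap_iff[of \<Psi> K B A2 z d] A12 by metis
  qed
qed

section \<open>Alpha-equivalence of frames\<close>

lemma frame_fn_swap:
  "frame_fn C (map (nswap x y) bs, permA C x y \<Psi>) = nswap x y ` frame_fn C (bs, \<Psi>)"
  by (simp add: frame_fn_def suppA_swap nswap_image_diff)

lemma frame_alpha_refl: "frame_alpha C (bs, \<Psi>) (bs, \<Psi>)"
proof (induction bs arbitrary: \<Psi> rule: length_induct)
  case (1 bs)
  show ?case
  proof (cases bs)
    case Nil
    then show ?thesis by (simp add: frame_alpha.intros)
  next
    case (Cons a as)
    have "finite ({a} \<union> suppA C \<Psi>)" by simp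
    then obtain c where c: "c \<notin> {a} \<union> suppA C \<Psi>" by (rule obtain_fresh)
    have "frame_alpha C (map (nswap a c) as, permA C a c \<Psi>) (map (nswap a c) as, permA C a c \<Psi>)"
      using 1 Cons by simp
    then show ?thesis
      unfolding Cons by (intro frame_alpha.intros(2)[where c = c]) (use c in \<open>auto simp: frame_fn_def\<close>)
  qed
qed

lemma frame_alpha_sym: "frame_alpha C F G \<Longrightarrow> frame_alpha C G F"
proof (induction rule: frame_alpha.induct)
  case (2 c a b as \<Psi> bs \<Psi>')
  show ?case by (rule frame_alpha.intros(2)[where c = c]) (use 2 in auto)
qed (rule frame_alpha.intros)

lemma frame_alpha_star_sym: "(frame_alpha C)\<^sup>*\<^sup>* F G \<Longrightarrow> (frame_alpha C)\<^sup>*\<^sup>* G F"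
  by (induction rule: rtranclp_induct) (auto intro: converse_rtranclp_into_rtranclp frame_alpha_sym)

lemma frame_alpha_frame_fn: "frame_alpha C F G \<Longrightarrow> frame_fn C F = frame_fn C G"
proof (induction rule: frame_alpha.induct)
  case (2 c a b as \<Psi> bs \<Psi>')
  have "nswap a c ` (suppA C \<Psi> - set as) = nswap b c ` (suppA C \<Psi>' - set bs)"
    using 2(3) by (simp add: frame_fn_def suppA_swap nswap_image_diff)
  moreover have "c \<noteq> a" "c \<noteq> b" "c \<notin> (suppA C \<Psi> - set as) - {a}" "c \<notin> (suppA C \<Psi>' - set bs) - {b}"
    using 2(1) by (auto simp: frame_fn_def)
  ultimately have "(suppA C \<Psi> - set as) - {a} = (suppA C \<Psi>' - set bs) - {b}"
    by (rule swap_image_eq_diff)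
  then show ?case by (auto simp: frame_fn_def)
qed simp

lemma frame_alpha_star_frame_fn: "(frame_alpha C)\<^sup>*\<^sup>* F G \<Longrightarrow> frame_fn C F = frame_fn C G"
  by (induction rule: rtranclp_induct) (simp_all add: frame_alpha_frame_fn)

lemma frame_alpha_Nil: "frame_alpha C F G \<Longrightarrow> fst F = [] \<Longrightarrow> G = F"
  by (induction rule: frame_alpha.induct) auto

lemma frame_alpha_unit:
  "frame_alpha C F G \<Longrightarrow> assert_equiv C (snd F) (aunit C) \<Longrightarrow> assert_equiv C (snd G) (aunit C)"
proof (induction rule: frame_alpha.induct)
  case (2 c a b as \<Psi> bs \<Psi>')
  then have "assert_equiv C (permA C b c \<Psi>') (aunit C)" using ae_unit_swap by simp
  then have "assert_equiv C (permA C b c (permA C b c \<Psi>')) (aunit C)" by (rule ae_unit_swap)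
  then show ?case by simp
qed simp

text \<open>The name c used by the step may occur in
  the environment; it is renamed away first.\<close>
lemma frame_alpha_fresh_chan:
  "frame_alpha C F G \<Longrightarrow> finite B \<Longrightarrow> env_names C \<Psi> K B \<inter> (set (fst F) \<union> set (fst G)) = {} \<Longrightarrow>
   fresh_chan C \<Psi> K B (snd F) = fresh_chan C \<Psi> K B (snd G)"
proof (induction arbitrary: \<Psi> K B rule: frame_alpha.induct)
  case (2 c a b as \<Psi>a bs \<Psi>b)
  have fresh_c: "fresh_chan C \<Psi> K B \<Psi>a = fresh_chan C \<Psi> K B \<Psi>b"
    if fB: "finite B" and E: "env_names C \<Psi> K B \<inter> ({c} \<union> set (a # as) \<union> set (b # bs)) = {}" for \<Psi> K B
  proof -
    have abc: "a \<notin> env_names C \<Psi> K B" "b \<notin> env_names C \<Psi> K B" "c \<notin> env_names C \<Psi> K B"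
      using E by auto
    have fix_a: "permA C a c \<Psi> = \<Psi>" "permT C a c K = K" "nswap a c ` B = B"
      and fix_b: "permA C b c \<Psi> = \<Psi>" "permT C b c K = K" "nswap b c ` B = B"
      using abc by (auto simp: env_names_def intro!: permA_fresh permT_fresh nswap_image_fresh)
    have "env_names C \<Psi> K B \<inter> nswap a c ` set as = {}" "env_names C \<Psi> K B \<inter> nswap b c ` set bs = {}"
      using E abc by (simp_all add: disjoint_nswap_image Int_Un_distrib)
    then have "fresh_chan C \<Psi> K B (permA C a c \<Psi>a) = fresh_chan C \<Psi> K B (permA C b c \<Psi>b)"
      using 2(3) fB by (simp add: Int_Un_distrib)
    then show ?thesis
      using fresh_chan_swap_iff[of \<Psi> K B \<Psi>a a c] fresh_chan_swap_iff[of \<Psi> K B \<Psi>b b c] fix_a fix_b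
      by simp
  qed
  have "\<forall>z \<in> {c} \<inter> env_names C \<Psi> K B. z \<notin> suppA C \<Psi>a \<and> z \<notin> suppA C \<Psi>b"
    using 2(1,5) by (auto simp: frame_fn_def)
  then obtain \<Psi>' K' B' where "finite B'"
      "env_names C \<Psi>' K' B' \<inter> ({c} \<union> (set (a # as) \<union> set (b # bs))) = {}"
      "fresh_chan C \<Psi> K B \<Psi>a = fresh_chan C \<Psi>' K' B' \<Psi>a"
      "fresh_chan C \<Psi> K B \<Psi>b = fresh_chan C \<Psi>' K' B' \<Psi>b"
    using fresh_chan_rename_env[of "{c}" "set (a # as) \<union> set (b # bs)" B \<Psi> K \<Psi>a \<Psi>b] 2(4,5)
    by auto
  then show ?case using fresh_c[of B' \<Psi>' K'] by (simp add: Un_assoc)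
qed simp

text \<open>The same for a chain of alpha-conversion steps: intermediate frames may use binders
  from the environment, which is again renamed away first.\<close>
lemma frame_alpha_star_fresh_chan:
  "(frame_alpha C)\<^sup>*\<^sup>* F G \<Longrightarrow> finite B \<Longrightarrow> env_names C \<Psi> K B \<inter> (set (fst F) \<union> set (fst G)) = {} \<Longrightarrow>
   fresh_chan C \<Psi> K B (snd F) = fresh_chan C \<Psi> K B (snd G)"
proof (induction arbitrary: \<Psi> K B rule: rtranclp_induct)
  case (step G H)
  have ffn: "frame_fn C F = frame_fn C G" "frame_fn C G = frame_fn C H"
    using frame_alpha_star_frame_fn[OF step(1)] frame_alpha_frame_fn[OF step(2)] by auto
  have "\<forall>z \<in> set (fst G) \<inter> env_names C \<Psi> K B. z \<notin> suppA C (snd F) \<and> z \<notin> suppA C (snd H)"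
    using step.prems(2) ffn by (auto simp: frame_fn_def)
  from fresh_chan_rename_env[OF finite_set finite_UnI[OF finite_set finite_set] step.prems this]
  obtain \<Psi>' K' B' where r: "finite B'"
      "env_names C \<Psi>' K' B' \<inter> (set (fst G) \<union> (set (fst F) \<union> set (fst H))) = {}"
      "fresh_chan C \<Psi> K B (snd F) = fresh_chan C \<Psi>' K' B' (snd F)"
      "fresh_chan C \<Psi> K B (snd H) = fresh_chan C \<Psi>' K' B' (snd H)"
    by blast
  have "fresh_chan C \<Psi>' K' B' (snd F) = fresh_chan C \<Psi>' K' B' (snd G)"
    using step.IH r(1,2) by blast
  also have "\<dots> = fresh_chan C \<Psi>' K' B' (snd H)"
    using frame_alpha_fresh_chan[OF step(2) r(1)] r(2) by blast
  finally show ?case using r(3,4) by simp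
qed simp

lemma frame_alpha_rename_bound:
  "x \<in> set bs \<Longrightarrow> d \<notin> suppA C \<Psi> \<Longrightarrow> d \<notin> set bs \<Longrightarrow>
   frame_alpha C (bs, \<Psi>) (map (nswap x d) bs, permA C x d \<Psi>)"
proof (induction bs arbitrary: \<Psi> rule: length_induct)
  case (1 bs)
  then obtain a as where bs: "bs = a # as" by (cases bs) auto
  have "finite ({a, x, d} \<union> suppA C \<Psi> \<union> set as)" by simp
  then obtain c where c: "c \<notin> {a, x, d} \<union> suppA C \<Psi> \<union> set as" by (rule obtain_fresh)
  have xd: "x \<noteq> d" using 1 by auto
  have c_fresh: "c \<notin> suppA C (permA C x d \<Psi>)"
    using c xd by (auto simp: suppA_swap mem_nswap_image)
  show ?case
  proof (cases "a = x")
    case True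
    have m: "map (nswap d c \<circ> nswap x d) as = map (nswap x c) as"
      using 1 c xd bs by (auto simp: nswap_def)
    have p: "permA C d c (permA C x d \<Psi>) = permA C x c \<Psi>"
      using c xd 1 by (simp add: permA_comp[of d c] permA_fresh)
    have "frame_alpha C (x # as, \<Psi>) (d # map (nswap x d) as, permA C x d \<Psi>)"
      by (intro frame_alpha.intros(2)[where c = c])
        (use c c_fresh xd in \<open>auto simp: frame_fn_def m p intro: frame_alpha_refl\<close>)
    then show ?thesis using True bs by simp
  next
    case False
    have ad: "a \<noteq> d" using 1 bs by auto
    have m: "map (nswap a c \<circ> nswap x d) as = map (nswap x d \<circ> nswap a c) as"
      using c ad False by (simp add: nswap_commute)
    have p: "permA C a c (permA C x d \<Psi>) = permA C x d (permA C a c \<Psi>)"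
      using c ad False by (intro nom_comm_swap[OF nomA]) auto
    have IH: "frame_alpha C (map (nswap a c) as, permA C a c \<Psi>)
        (map (nswap x d) (map (nswap a c) as), permA C x d (permA C a c \<Psi>))"
    proof -
      have "x \<in> set (map (nswap a c) as)"
        using 1 bs c False by (auto simp: image_iff intro!: bexI[of _ x])
      moreover have "d \<notin> suppA C (permA C a c \<Psi>)"
        using 1 c ad by (auto simp: suppA_swap mem_nswap_image)
      moreover have "d \<notin> set (map (nswap a c) as)"
        using 1 bs c ad by (auto simp: nswap_def)
      ultimately show ?thesis
        using 1(1)[rule_format, of "map (nswap a c) as" "permA C a c \<Psi>"] bs by simp
    qed
    have "frame_alpha C (a # as, \<Psi>) (a # map (nswap x d) as, permA C x d \<Psi>)"
      by (intro frame_alpha.intros(2)[where c = c]) (use c c_fresh IH in \<open>auto simp: frame_fn_def m p\<close>)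
    then show ?thesis using False ad bs by simp
  qed
qed

lemma frame_alpha_swap:
  "frame_alpha C F G \<Longrightarrow>
   frame_alpha C (map (nswap x y) (fst F), permA C x y (snd F)) (map (nswap x y) (fst G), permA C x y (snd G))"
proof (induction rule: frame_alpha.induct)
  case (2 c a b as \<Psi> bs \<Psi>')
  let ?c = "nswap x y c"
  have side: "?c \<notin> {nswap x y a, nswap x y b}
      \<union> frame_fn C (nswap x y a # map (nswap x y) as, permA C x y \<Psi>)
      \<union> frame_fn C (nswap x y b # map (nswap x y) bs, permA C x y \<Psi>')"
    using 2(1) frame_fn_swap[of x y "a # as" \<Psi>] frame_fn_swap[of x y "b # bs" \<Psi>']
    by (simp add: nswap_inj nswap_in_image)
  have "map (nswap x y) (map (nswap a c) as) = map (nswap (nswap x y a) ?c) (map (nswap x y) as)"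
    "map (nswap x y) (map (nswap b c) bs) = map (nswap (nswap x y b) ?c) (map (nswap x y) bs)"
    by (induct as, simp_all only: list.map nswap_comp[of x y a c])
      (induct bs, simp_all only: list.map nswap_comp[of x y b c])
  moreover have "permA C x y (permA C a c \<Psi>) = permA C (nswap x y a) ?c (permA C x y \<Psi>)"
    "permA C x y (permA C b c \<Psi>') = permA C (nswap x y b) ?c (permA C x y \<Psi>')"
    by (rule permA_comp)+
  ultimately have inner: "frame_alpha C
      (map (nswap (nswap x y a) ?c) (map (nswap x y) as), permA C (nswap x y a) ?c (permA C x y \<Psi>))
      (map (nswap (nswap x y b) ?c) (map (nswap x y) bs), permA C (nswap x y b) ?c (permA C x y \<Psi>'))"
    using 2(3) by (simp only: fst_conv snd_conv)
  show ?case
    by (simp only: fst_conv snd_conv list.map) (rule frame_alpha.intros(2)[OF side inner])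
qed (simp add: frame_alpha.intros)

lemma frame_alpha_Cons: "frame_alpha C (bs, \<Psi>) (bs', \<Psi>') \<Longrightarrow> frame_alpha C (b # bs, \<Psi>) (b # bs', \<Psi>')"
proof -
  assume alpha: "frame_alpha C (bs, \<Psi>) (bs', \<Psi>')"
  have "finite ({b} \<union> suppA C \<Psi> \<union> suppA C \<Psi>')" by simp
  then obtain c where c: "c \<notin> {b} \<union> suppA C \<Psi> \<union> suppA C \<Psi>'" by (rule obtain_fresh)
  have "frame_alpha C (map (nswap b c) bs, permA C b c \<Psi>) (map (nswap b c) bs', permA C b c \<Psi>')"
    using frame_alpha_swap[OF alpha, of b c] by simp
  then show ?thesis
    by (intro frame_alpha.intros(2)[where c = c]) (use c in \<open>auto simp: frame_fn_def\<close>)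
qed

lemma frame_alpha_star_Cons:
  "(frame_alpha C)\<^sup>*\<^sup>* F G \<Longrightarrow> (frame_alpha C)\<^sup>*\<^sup>* (b # fst F, snd F) (b # fst G, snd G)"
proof (induction rule: rtranclp_induct)
  case (step y z)
  have "frame_alpha C (b # fst y, snd y) (b # fst z, snd z)"
    using step(2) by (intro frame_alpha_Cons) simp
  then show ?case using step(3) by (meson rtranclp.rtrancl_into_rtrancl)
qed simp

end

section \<open>Frames of agents\<close>

text \<open>The agents whose frame is (\<nu>[])1 by definition: nil, prefixes, case and replication.\<close>
fun frameless :: "('t, 'c, 'a) agent \<Rightarrow> bool" where
  "frameless (Res x P) = False"
| "frameless (Par P Q) = False"
| "frameless (Assert \<Psi>) = False"
| "frameless P = True"

definition par_frames :: "('t, 'c, 'a, 'z) psi_scheme \<Rightarrow>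
  ('t, 'c, 'a) agent \<Rightarrow> name list \<Rightarrow> 'a \<Rightarrow> ('t, 'c, 'a) agent \<Rightarrow> name list \<Rightarrow> 'a \<Rightarrow> bool" where
  "par_frames C P b1 \<Psi>1 Q b2 \<Psi>2 \<longleftrightarrow> has_frame C P b1 \<Psi>1 \<and> has_frame C Q b2 \<Psi>2 \<and>
     set b1 \<inter> (set b2 \<union> suppA C \<Psi>2) = {} \<and> set b2 \<inter> (set b1 \<union> suppA C \<Psi>1) = {}"

context psi
begin

lemma has_frame_star:
  "(frame_alpha C)\<^sup>*\<^sup>* F G \<Longrightarrow> has_frame C P (fst F) (snd F) \<Longrightarrow> has_frame C P (fst G) (snd G)"
  by (induction rule: rtranclp_induct) (auto intro: has_frame.intros(9))

lemma frame_fn_subset: "has_frame C P bs \<Psi> \<Longrightarrow> suppA C \<Psi> - set bs \<subseteq> fn C P"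
proof (induction rule: has_frame.induct)
  case (7 P bP \<Psi>P Q bQ \<Psi>Q)
  then show ?case using suppA_comp[of \<Psi>P \<Psi>Q] by auto
next
  case (9 P bs \<Psi> bs' \<Psi>')
  then show ?case using frame_alpha_frame_fn[OF 9(2)] by (simp add: frame_fn_def)
qed auto

lemma guarded_frame_unit: "has_frame C P bs \<Psi> \<Longrightarrow> guarded P \<Longrightarrow> assert_equiv C \<Psi> (aunit C)"
proof (induction rule: has_frame.induct)
  case (7 P bP \<Psi>P Q bQ \<Psi>Q)
  then have "assert_equiv C (acomp C \<Psi>P \<Psi>Q) (acomp C (aunit C) \<Psi>Q)" by (auto intro: ae_congr)
  moreover have "assert_equiv C (acomp C (aunit C) \<Psi>Q) \<Psi>Q" by (meson ae_comm ae_unit ae_trans)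
  ultimately show ?case using 7 by (meson ae_trans guarded.simps(6))
next
  case (9 P bs \<Psi> bs' \<Psi>')
  then show ?case using frame_alpha_unit[OF 9(2)] by simp
qed (auto simp: assert_equiv_def)

lemma frame_frameless: "has_frame C P bs \<Psi> \<Longrightarrow> frameless P \<Longrightarrow> bs = [] \<and> \<Psi> = aunit C"
proof (induction rule: has_frame.induct)
  case (9 P bs \<Psi> bs' \<Psi>')
  then show ?case using frame_alpha_Nil[OF 9(2)] by auto
qed auto

lemma frame_Assert: "has_frame C (Assert \<Phi>) bs \<Psi> \<Longrightarrow> bs = [] \<and> \<Psi> = \<Phi>"
proof (induction "Assert \<Phi> :: ('t, 'c, 'a) agent" bs \<Psi> rule: has_frame.induct)
  case (9 bs \<Psi> bs' \<Psi>')
  then show ?case using frame_alpha_Nil[OF 9(3)] by auto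
qed auto

lemma frame_Res:
  "has_frame C (Res b Q) bs \<Psi> \<Longrightarrow>
   \<exists>bs0 \<Psi>0. has_frame C Q bs0 \<Psi>0 \<and> (frame_alpha C)\<^sup>*\<^sup>* (b # bs0, \<Psi>0) (bs, \<Psi>)"
proof (induction "Res b Q" bs \<Psi> rule: has_frame.induct)
  case (9 bs \<Psi> bs' \<Psi>')
  then show ?case by (meson rtranclp.rtrancl_into_rtrancl)
qed auto

lemma par_frames_sym: "par_frames C P b1 \<Psi>1 Q b2 \<Psi>2 = par_frames C Q b2 \<Psi>2 P b1 \<Psi>1"
  by (auto simp: par_frames_def)

lemma par_frames_has_frame:
  "par_frames C P b1 \<Psi>1 Q b2 \<Psi>2 \<Longrightarrow> has_frame C (Par P Q) (b1 @ b2) (acomp C \<Psi>1 \<Psi>2)"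
  by (auto simp: par_frames_def intro: has_frame.intros(7))

lemma frame_Par:
  "has_frame C (Par P Q) bs \<Psi> \<Longrightarrow>
   \<exists>b1 \<Psi>1 b2 \<Psi>2. par_frames C P b1 \<Psi>1 Q b2 \<Psi>2 \<and> (frame_alpha C)\<^sup>*\<^sup>* (b1 @ b2, acomp C \<Psi>1 \<Psi>2) (bs, \<Psi>)"
proof (induction "Par P Q" bs \<Psi> rule: has_frame.induct)
  case (7 bP \<Psi>P bQ \<Psi>Q)
  then show ?case by (auto simp: par_frames_def)
next
  case (9 bs \<Psi> bs' \<Psi>')
  then show ?case by (meson rtranclp.rtrancl_into_rtrancl)
qed

lemma has_frame_swap:
  "has_frame C P bs \<Psi> \<Longrightarrow> has_frame C (perm_agent C x y P) (map (nswap x y) bs) (permA C x y \<Psi>)"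
proof (induction rule: has_frame.induct)
  case (7 P bP \<Psi>P Q bQ \<Psi>Q)
  have "set (map (nswap x y) bP) \<inter> (set (map (nswap x y) bQ) \<union> suppA C (permA C x y \<Psi>Q)) = {}"
    "set (map (nswap x y) bQ) \<inter> (set (map (nswap x y) bP) \<union> suppA C (permA C x y \<Psi>P)) = {}"
    using 7(3,4) by (simp_all add: suppA_swap image_Un[symmetric] nswap_image_inter)
  then show ?case using has_frame.intros(7)[OF 7(5,6)] by (simp add: eqv_comp)
next
  case (9 P bs \<Psi> bs' \<Psi>')
  then show ?case using frame_alpha_swap[OF 9(2), of x y] has_frame.intros(9) by simp
qed (auto intro: has_frame.intros)

lemma frame_rename:
  "has_frame C P bs \<Psi> \<Longrightarrow> finite Y \<Longrightarrow>
   \<exists>bs' \<Psi>'. has_frame C P bs' \<Psi>' \<and> set bs' \<inter> Y = {} \<and> (frame_alpha C)\<^sup>*\<^sup>* (bs, \<Psi>) (bs', \<Psi>')"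
proof (induction "card (set bs \<inter> Y)" arbitrary: bs \<Psi> rule: less_induct)
  case less
  show ?case
  proof (cases "set bs \<inter> Y = {}")
    case False
    then obtain x where x: "x \<in> set bs \<inter> Y" by blast
    have "finite (suppA C \<Psi> \<union> set bs \<union> Y)" using less.prems by simp
    then obtain d where d: "d \<notin> suppA C \<Psi> \<union> set bs \<union> Y" by (rule obtain_fresh)
    have alpha: "frame_alpha C (bs, \<Psi>) (map (nswap x d) bs, permA C x d \<Psi>)"
      using x d by (intro frame_alpha_rename_bound) auto
    have "set (map (nswap x d) bs) \<inter> Y = (set bs \<inter> Y) - {x}"
      using x d nswap_image_replace[of x "set bs" d] by auto
    then have "card (set (map (nswap x d) bs) \<inter> Y) < card (set bs \<inter> Y)"
      using x less.prems(2) by (metis card_Diff1_less finite_Int)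
    from less.hyps[OF this has_frame.intros(9)[OF less.prems(1) alpha] less.prems(2)]
    show ?thesis using alpha by (meson converse_rtranclp_into_rtranclp)
  qed (use less.prems in blast)
qed

lemma par_frames_rename_left:
  assumes par: "par_frames C P b1 \<Psi>1 Q b2 \<Psi>2" and x: "x \<in> set b1"
    and d: "d \<notin> suppA C \<Psi>1 \<union> suppA C \<Psi>2 \<union> set b1 \<union> set b2"
  shows "par_frames C P (map (nswap x d) b1) (permA C x d \<Psi>1) Q b2 \<Psi>2"
proof -
  have alpha: "frame_alpha C (b1, \<Psi>1) (map (nswap x d) b1, permA C x d \<Psi>1)"
    using x d by (intro frame_alpha_rename_bound) auto
  have set1: "set (map (nswap x d) b1) = insert d (set b1 - {x})"
    using x d nswap_image_replace[of x "set b1" d] by simp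
  have "x \<notin> set b2 \<union> suppA C \<Psi>2" using par x by (auto simp: par_frames_def)
  then show ?thesis
    using par d set1 has_frame.intros(9)[OF _ alpha]
    by (auto simp: par_frames_def suppA_swap nswap_def split: if_splits)
qed

text \<open>One renaming step on a pair of parallel frames: the renamed binder x belongs to
  exactly one of the components, and only that component changes.\<close>
lemma par_frames_rename_bound:
  assumes par: "par_frames C P b1 \<Psi>1 Q b2 \<Psi>2" and x: "x \<in> set (b1 @ b2)"
    and d: "d \<notin> suppA C \<Psi>1 \<union> suppA C \<Psi>2 \<union> set b1 \<union> set b2"
  obtains e1 \<Theta>1 e2 \<Theta>2 where "par_frames C P e1 \<Theta>1 Q e2 \<Theta>2"
    "e1 @ e2 = map (nswap x d) (b1 @ b2)" "acomp C \<Theta>1 \<Theta>2 = permA C x d (acomp C \<Psi>1 \<Psi>2)"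
proof (cases "x \<in> set b1")
  case True
  then have "x \<notin> set b2 \<union> suppA C \<Psi>2" using par by (auto simp: par_frames_def)
  then have "map (nswap x d) b2 = b2" "permA C x d \<Psi>2 = \<Psi>2"
    using d by (auto intro: map_idI nswap_other permA_fresh)
  then show ?thesis
    using that[OF par_frames_rename_left[OF par True d]] by (simp add: eqv_comp)
next
  case False
  then have x2: "x \<in> set b2" using x by auto
  then have "x \<notin> set b1 \<union> suppA C \<Psi>1" using par by (auto simp: par_frames_def)
  then have "map (nswap x d) b1 = b1" "permA C x d \<Psi>1 = \<Psi>1"
    using d by (auto intro: map_idI nswap_other permA_fresh)
  moreover have "par_frames C P b1 \<Psi>1 Q (map (nswap x d) b2) (permA C x d \<Psi>2)"
    using par_frames_rename_left[of Q b2 \<Psi>2 P b1 \<Psi>1 x d] par x2 d by (auto simp: par_frames_sym)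
  ultimately show ?thesis
    using that by (simp add: eqv_comp)
qed

lemma par_frames_rename:
  "par_frames C P b1 \<Psi>1 Q b2 \<Psi>2 \<Longrightarrow> finite Y \<Longrightarrow>
   \<exists>e1 \<Theta>1 e2 \<Theta>2. par_frames C P e1 \<Theta>1 Q e2 \<Theta>2 \<and> set (e1 @ e2) \<inter> Y = {} \<and>
     (frame_alpha C)\<^sup>*\<^sup>* (b1 @ b2, acomp C \<Psi>1 \<Psi>2) (e1 @ e2, acomp C \<Theta>1 \<Theta>2)"
proof (induction "card (set (b1 @ b2) \<inter> Y)" arbitrary: b1 \<Psi>1 b2 \<Psi>2 rule: less_induct)
  case less
  show ?case
  proof (cases "set (b1 @ b2) \<inter> Y = {}")
    case False
    then obtain x where x: "x \<in> set (b1 @ b2) \<inter> Y" by blast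
    have "finite (suppA C \<Psi>1 \<union> suppA C \<Psi>2 \<union> set b1 \<union> set b2 \<union> Y)" using less.prems by simp
    then obtain d where d: "d \<notin> suppA C \<Psi>1 \<union> suppA C \<Psi>2 \<union> set b1 \<union> set b2 \<union> Y"
      by (rule obtain_fresh)
    obtain e1 \<Theta>1 e2 \<Theta>2 where e: "par_frames C P e1 \<Theta>1 Q e2 \<Theta>2"
        "e1 @ e2 = map (nswap x d) (b1 @ b2)" "acomp C \<Theta>1 \<Theta>2 = permA C x d (acomp C \<Psi>1 \<Psi>2)"
      using par_frames_rename_bound[OF less.prems(1)] x d by blast
    have alpha: "frame_alpha C (b1 @ b2, acomp C \<Psi>1 \<Psi>2) (e1 @ e2, acomp C \<Theta>1 \<Theta>2)"
      unfolding e(2,3) using x d suppA_comp[of \<Psi>1 \<Psi>2] by (intro frame_alpha_rename_bound) auto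
    have "set (e1 @ e2) \<inter> Y = (set (b1 @ b2) \<inter> Y) - {x}"
      unfolding e(2) using x d nswap_image_replace[of x "set (b1 @ b2)" d] by auto
    then have "card (set (e1 @ e2) \<inter> Y) < card (set (b1 @ b2) \<inter> Y)"
      using x less.prems(2) by (metis card_Diff1_less finite_Int)
    then show ?thesis
      using less.hyps[OF _ e(1) less.prems(2)] converse_rtranclp_into_rtranclp[of "frame_alpha C", OF alpha]
      by blast
  qed (use less.prems in blast)
qed

lemma finite_fn [simp]: "finite (fn C P)"
proof (induction P)
  case (PCase cs)
  have "finite (suppC C \<phi> \<union> fn C Q)" if "(\<phi>, Q) \<in> set cs" for \<phi> Q
    using PCase.IH[OF that] by simp
  then show ?case by auto
qed auto

lemma frame_exists: "finite Y \<Longrightarrow> \<exists>bs \<Psi>. has_frame C P bs \<Psi> \<and> set bs \<inter> Y = {}"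
proof (induction P arbitrary: Y)
  case (Res b P)
  then obtain bs \<Psi> where "has_frame C P bs \<Psi>" by blast
  then have "has_frame C (Res b P) (b # bs) \<Psi>" by (rule has_frame.intros)
  from frame_rename[OF this Res.prems] show ?case by blast
next
  case (Par P Q)
  obtain bQ \<Psi>Q where Q: "has_frame C Q bQ \<Psi>Q" "set bQ \<inter> (Y \<union> fn C P) = {}"
    using Par.IH(2)[of "Y \<union> fn C P"] Par.prems by auto
  obtain bP \<Psi>P where P: "has_frame C P bP \<Psi>P" "set bP \<inter> (Y \<union> set bQ \<union> suppA C \<Psi>Q) = {}"
    using Par.IH(1)[of "Y \<union> set bQ \<union> suppA C \<Psi>Q"] Par.prems by auto
  have "set bQ \<inter> (set bP \<union> suppA C \<Psi>P) = {}"
    using Q(2) P(2) frame_fn_subset[OF P(1)] by auto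
  then have "has_frame C (Par P Q) (bP @ bQ) (acomp C \<Psi>P \<Psi>Q)"
    using P Q by (intro has_frame.intros(7)) auto
  moreover have "set (bP @ bQ) \<inter> Y = {}" using P(2) Q(2) by auto
  ultimately show ?case by blast
next
  case (Assert \<Psi>)
  show ?case using has_frame.intros(6)[of C \<Psi>] by fastforce
qed (fastforce intro: has_frame.intros)+

lemma obtain_frame:
  "finite Y \<Longrightarrow> (\<And>bs \<Psi>. has_frame C P bs \<Psi> \<Longrightarrow> set bs \<inter> Y = {} \<Longrightarrow> thesis) \<Longrightarrow> thesis"
  using frame_exists by blast

end

definition frame_invariant :: "('t, 'c, 'a, 'z) psi_scheme \<Rightarrow> ('t, 'c, 'a) agent \<Rightarrow> bool" where
  "frame_invariant C P \<longleftrightarrow> (\<forall>bs \<Psi> bs' \<Psi>' \<Psi>e K B. has_frame C P bs \<Psi> \<longrightarrow> has_frame C P bs' \<Psi>' \<longrightarrow>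
     finite B \<longrightarrow> env_names C \<Psi>e K B \<inter> (set bs \<union> set bs') = {} \<longrightarrow>
     fresh_chan C \<Psi>e K B \<Psi> \<longrightarrow> fresh_chan C \<Psi>e K B \<Psi>')"

context psi
begin

lemma frame_invariant_frameless: "frameless P \<Longrightarrow> frame_invariant C P"
  by (auto simp: frame_invariant_def dest!: frame_frameless)

lemma frame_invariant_Assert: "frame_invariant C (Assert \<Phi>)"
  by (auto simp: frame_invariant_def dest!: frame_Assert)

text \<open>Restriction: both frames of (\<nu>b)Q come from frames of Q prefixed by b.  The bound
  name b may clash with the environment, so the environment is renamed away from b first;
  then the frames of Q are renamed away from the new environment and compared by the
  hypothesis on Q.\<close>
lemma frame_invariant_Res:
  assumes inv: "frame_invariant C Q"
  shows "frame_invariant C (Res b Q)"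
  unfolding frame_invariant_def
proof (intro allI impI)
  fix bs \<Psi> bs' \<Psi>' \<Psi>e K B
  assume F: "has_frame C (Res b Q) bs \<Psi>" and F': "has_frame C (Res b Q) bs' \<Psi>'"
    and fB: "finite B" and E: "env_names C \<Psi>e K B \<inter> (set bs \<union> set bs') = {}"
    and fc: "fresh_chan C \<Psi>e K B \<Psi>"
  obtain bs0 \<Psi>0 where F0: "has_frame C Q bs0 \<Psi>0" "(frame_alpha C)\<^sup>*\<^sup>* (b # bs0, \<Psi>0) (bs, \<Psi>)"
    using frame_Res[OF F] by blast
  obtain cs0 \<Phi>0 where F0': "has_frame C Q cs0 \<Phi>0" "(frame_alpha C)\<^sup>*\<^sup>* (b # cs0, \<Phi>0) (bs', \<Psi>')"
    using frame_Res[OF F'] by blast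
  have "\<forall>z \<in> {b} \<inter> env_names C \<Psi>e K B. z \<notin> suppA C \<Psi> \<and> z \<notin> suppA C \<Psi>'"
    using E frame_alpha_star_frame_fn[OF F0(2)] frame_alpha_star_frame_fn[OF F0'(2)]
    by (auto simp: frame_fn_def)
  from fresh_chan_rename_env[OF _ _ fB E this]
  obtain \<Psi>1 K1 B1 where env: "finite B1" "env_names C \<Psi>1 K1 B1 \<inter> ({b} \<union> (set bs \<union> set bs')) = {}"
      "fresh_chan C \<Psi>e K B \<Psi> = fresh_chan C \<Psi>1 K1 B1 \<Psi>"
      "fresh_chan C \<Psi>e K B \<Psi>' = fresh_chan C \<Psi>1 K1 B1 \<Psi>'"
    by auto
  let ?E = "env_names C \<Psi>1 K1 B1"
  obtain bs1 \<Psi>1' where F1: "has_frame C Q bs1 \<Psi>1'" "set bs1 \<inter> ?E = {}"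
      "(frame_alpha C)\<^sup>*\<^sup>* (bs0, \<Psi>0) (bs1, \<Psi>1')"
    using frame_rename[OF F0(1) finite_env_names[OF env(1)]] by blast
  obtain cs1 \<Phi>1 where F1': "has_frame C Q cs1 \<Phi>1" "set cs1 \<inter> ?E = {}"
      "(frame_alpha C)\<^sup>*\<^sup>* (cs0, \<Phi>0) (cs1, \<Phi>1)"
    using frame_rename[OF F0'(1) finite_env_names[OF env(1)]] by blast
  have chain: "(frame_alpha C)\<^sup>*\<^sup>* (b # bs1, \<Psi>1') (bs, \<Psi>)"
      "(frame_alpha C)\<^sup>*\<^sup>* (b # cs1, \<Phi>1) (bs', \<Psi>')"
    using frame_alpha_star_sym[OF frame_alpha_star_Cons[OF F1(3), of b]] F0(2)
      frame_alpha_star_sym[OF frame_alpha_star_Cons[OF F1'(3), of b]] F0'(2)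
    by simp_all
  have "fresh_chan C \<Psi>1 K1 B1 \<Psi>1' = fresh_chan C \<Psi>1 K1 B1 \<Psi>"
    using frame_alpha_star_fresh_chan[OF chain(1) env(1)] env(2) F1(2) by auto
  moreover have "fresh_chan C \<Psi>1 K1 B1 \<Phi>1 = fresh_chan C \<Psi>1 K1 B1 \<Psi>'"
    using frame_alpha_star_fresh_chan[OF chain(2) env(1)] env(2) F1'(2) by auto
  moreover have "fresh_chan C \<Psi>1 K1 B1 \<Psi>1' \<longrightarrow> fresh_chan C \<Psi>1 K1 B1 \<Phi>1"
    using inv F1(1,2) F1'(1,2) env(1) unfolding frame_invariant_def by blast
  ultimately show "fresh_chan C \<Psi>e K B \<Psi>'" using fc env(3,4) by simp
qed

text \<open>The components are exchanged one at a time, moving the other component into the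
  environment.\<close>
lemma fresh_chan_par_frames:
  assumes invP: "frame_invariant C P" and invQ: "frame_invariant C Q"
    and e: "par_frames C P e1 \<Theta>1 Q e2 \<Theta>2" and f: "par_frames C P f1 \<Lambda>1 Q f2 \<Lambda>2" and fB: "finite B"
    and e_fresh: "set (e1 @ e2) \<inter> (env_names C \<Psi> K B \<union> fn C P) = {}"
    and f_fresh: "set (f1 @ f2) \<inter> (env_names C \<Psi> K B \<union> set e1 \<union> set e2 \<union> suppA C \<Theta>1 \<union> suppA C \<Theta>2) = {}"
    and fc: "fresh_chan C \<Psi> K B (acomp C \<Theta>1 \<Theta>2)"
  shows "fresh_chan C \<Psi> K B (acomp C \<Lambda>1 \<Lambda>2)"
proof -
  have "env_names C (acomp C \<Psi> \<Theta>2) K B \<inter> (set e1 \<union> set f1) = {}"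
    using env_names_comp[of \<Psi> \<Theta>2 K B] e e_fresh f_fresh by (auto simp: par_frames_def)
  moreover have "fresh_chan C (acomp C \<Psi> \<Theta>2) K B \<Theta>1"
    using fc by (simp add: fresh_chan_comp_left)
  ultimately have "fresh_chan C (acomp C \<Psi> \<Theta>2) K B \<Lambda>1"
    using invP e f fB unfolding frame_invariant_def par_frames_def by blast
  then have fc2: "fresh_chan C (acomp C \<Psi> \<Lambda>1) K B \<Theta>2"
    using fresh_chan_comp_left[of \<Psi> K B \<Lambda>1 \<Theta>2] fresh_chan_comp_right[of \<Psi> K B \<Lambda>1 \<Theta>2] by simp
  have "set e2 \<inter> suppA C \<Lambda>1 = {}"
    using frame_fn_subset[of P f1 \<Lambda>1] e_fresh f_fresh f by (auto simp: par_frames_def)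
  then have "env_names C (acomp C \<Psi> \<Lambda>1) K B \<inter> (set e2 \<union> set f2) = {}"
    using env_names_comp[of \<Psi> \<Lambda>1 K B] e_fresh f_fresh f by (auto simp: par_frames_def)
  then have "fresh_chan C (acomp C \<Psi> \<Lambda>1) K B \<Lambda>2"
    using invQ fc2 e f fB unfolding frame_invariant_def par_frames_def by blast
  then show ?thesis by (simp add: fresh_chan_comp_right)
qed

lemma frame_invariant_Par:
  assumes invP: "frame_invariant C P" and invQ: "frame_invariant C Q"
  shows "frame_invariant C (Par P Q)"
  unfolding frame_invariant_def
proof (intro allI impI)
  fix bs \<Psi> bs' \<Psi>' \<Psi>e K B
  assume F: "has_frame C (Par P Q) bs \<Psi>" and F': "has_frame C (Par P Q) bs' \<Psi>'"
    and fB: "finite B" and E: "env_names C \<Psi>e K B \<inter> (set bs \<union> set bs') = {}"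
    and fc: "fresh_chan C \<Psi>e K B \<Psi>"
  let ?E = "env_names C \<Psi>e K B"
  obtain b1 \<Psi>1 b2 \<Psi>2 where "par_frames C P b1 \<Psi>1 Q b2 \<Psi>2"
      and chain_b: "(frame_alpha C)\<^sup>*\<^sup>* (b1 @ b2, acomp C \<Psi>1 \<Psi>2) (bs, \<Psi>)"
    using frame_Par[OF F] by blast
  from par_frames_rename[OF this(1), of "?E \<union> fn C P"] fB
  obtain e1 \<Theta>1 e2 \<Theta>2 where e: "par_frames C P e1 \<Theta>1 Q e2 \<Theta>2"
      "set (e1 @ e2) \<inter> (?E \<union> fn C P) = {}"
      "(frame_alpha C)\<^sup>*\<^sup>* (b1 @ b2, acomp C \<Psi>1 \<Psi>2) (e1 @ e2, acomp C \<Theta>1 \<Theta>2)"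
    by (auto simp: finite_env_names)
  obtain c1 \<Phi>1 c2 \<Phi>2 where "par_frames C P c1 \<Phi>1 Q c2 \<Phi>2"
      and chain_c: "(frame_alpha C)\<^sup>*\<^sup>* (c1 @ c2, acomp C \<Phi>1 \<Phi>2) (bs', \<Psi>')"
    using frame_Par[OF F'] by blast
  from par_frames_rename[OF this(1), of "?E \<union> set e1 \<union> set e2 \<union> suppA C \<Theta>1 \<union> suppA C \<Theta>2"] fB
  obtain f1 \<Lambda>1 f2 \<Lambda>2 where f: "par_frames C P f1 \<Lambda>1 Q f2 \<Lambda>2"
      "set (f1 @ f2) \<inter> (?E \<union> set e1 \<union> set e2 \<union> suppA C \<Theta>1 \<union> suppA C \<Theta>2) = {}"
      "(frame_alpha C)\<^sup>*\<^sup>* (c1 @ c2, acomp C \<Phi>1 \<Phi>2) (f1 @ f2, acomp C \<Lambda>1 \<Lambda>2)"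
    by (auto simp: finite_env_names)
  have chain: "(frame_alpha C)\<^sup>*\<^sup>* (e1 @ e2, acomp C \<Theta>1 \<Theta>2) (bs, \<Psi>)"
      "(frame_alpha C)\<^sup>*\<^sup>* (f1 @ f2, acomp C \<Lambda>1 \<Lambda>2) (bs', \<Psi>')"
    using frame_alpha_star_sym[OF e(3)] chain_b frame_alpha_star_sym[OF f(3)] chain_c by simp_all
  have "fresh_chan C \<Psi>e K B (acomp C \<Theta>1 \<Theta>2) = fresh_chan C \<Psi>e K B \<Psi>"
    using frame_alpha_star_fresh_chan[OF chain(1) fB] E e(2) by auto
  moreover have "fresh_chan C \<Psi>e K B (acomp C \<Lambda>1 \<Lambda>2) = fresh_chan C \<Psi>e K B \<Psi>'"
    using frame_alpha_star_fresh_chan[OF chain(2) fB] E f(2) by auto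
  ultimately show "fresh_chan C \<Psi>e K B \<Psi>'"
    using fresh_chan_par_frames[OF invP invQ e(1) f(1) fB e(2) f(2)] fc by simp
qed

lemma frame_invariant: "frame_invariant C P"
  by (induction P)
    (auto intro: frame_invariant_frameless frame_invariant_Assert frame_invariant_Res frame_invariant_Par)

lemma frame_rename_witness:
  assumes "has_frame C P bs A" "set bs \<inter> (suppA C \<Psi> \<union> suppT C K) = {}"
    and fB: "finite B" and M: "suppT C M \<inter> B = {}" and "entails C (acomp C \<Psi> A) (chan_eq C M K)"
  shows "\<exists>bs' A'. has_frame C P bs' A' \<and> set bs' \<inter> env_names C \<Psi> K B = {} \<and>
      entails C (acomp C \<Psi> A') (chan_eq C M K)"
  using assms(1,2,5)
proof (induction "card (set bs \<inter> B)" arbitrary: bs A rule: less_induct)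
  case less
  show ?case
  proof (cases "set bs \<inter> B = {}")
    case True
    then show ?thesis using less.prems by (auto simp: env_names_def)
  next
    case False
    then obtain x where x: "x \<in> set bs \<inter> B" by blast
    have "finite (suppA C A \<union> set bs \<union> env_names C \<Psi> K B \<union> suppT C M)"
      using fB finite_env_names by simp
    then obtain d where d: "d \<notin> suppA C A \<union> set bs \<union> env_names C \<Psi> K B \<union> suppT C M"
      by (rule obtain_fresh)
    have alpha: "frame_alpha C (bs, A) (map (nswap x d) bs, permA C x d A)"
      using x d by (intro frame_alpha_rename_bound) auto
    have "permA C x d \<Psi> = \<Psi>" "permT C x d K = K" "permT C x d M = M"
      using x d less.prems(2) M by (auto simp: env_names_def intro: permA_fresh permT_fresh)
    then have "entails C (acomp C \<Psi> (permA C x d A)) (chan_eq C M K)"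
      using ent_swap[OF less.prems(3), of x d] by (simp add: eqv_comp eqv_chan)
    moreover have set_bs: "set (map (nswap x d) bs) = insert d (set bs - {x})"
      using x d nswap_image_replace[of x "set bs" d] by simp
    moreover have "set (map (nswap x d) bs) \<inter> B = (set bs \<inter> B) - {x}"
      using set_bs d by (auto simp: env_names_def)
    then have "card (set (map (nswap x d) bs) \<inter> B) < card (set bs \<inter> B)"
      using x fB by (metis card_Diff1_less finite_Int)
    moreover have "set (map (nswap x d) bs) \<inter> (suppA C \<Psi> \<union> suppT C K) = {}"
      using set_bs less.prems(2) d by (auto simp: env_names_def)
    ultimately show ?thesis
      using less.hyps has_frame.intros(9)[OF less.prems(1) alpha] by blast
  qed
qed

text \<open>Transfer of fresh_chan between frames of an agent.  The source frame only needs
  binders fresh for \<Psi> and K: the binders in B are renamed away first.\<close>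
lemma fresh_chan_transfer:
  assumes F: "has_frame C P bs A" "set bs \<inter> (suppA C \<Psi> \<union> suppT C K) = {}" and fB: "finite B"
    and "fresh_chan C \<Psi> K B A"
    and F': "has_frame C P bs' A'" "set bs' \<inter> env_names C \<Psi> K B = {}"
  shows "fresh_chan C \<Psi> K B A'"
proof -
  obtain M where M: "suppT C M \<inter> B = {}" "entails C (acomp C \<Psi> A) (chan_eq C M K)"
    using assms(4) unfolding fresh_chan_def by blast
  from frame_rename_witness[OF F fB M]
  obtain bs'' A'' where "has_frame C P bs'' A''" "set bs'' \<inter> env_names C \<Psi> K B = {}"
      "fresh_chan C \<Psi> K B A''"
    using M(1) unfolding fresh_chan_def by blast
  then show ?thesis
    using frame_invariant[of P] F' fB unfolding frame_invariant_def by blast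
qed

end

section \<open>Alpha-equivalence of agents\<close>

text \<open>Unlike wf_agent it is preserved by
  alpha-conversion, since it does not look inside input patterns.\<close>
fun guarded_bodies :: "('t, 'c, 'a) agent \<Rightarrow> bool" where
  "guarded_bodies (PCase cs) = (\<forall>(\<phi>, P)\<in>set cs. guarded P \<and> guarded_bodies P)"
| "guarded_bodies (Res x P) = guarded_bodies P"
| "guarded_bodies (Par P Q) = (guarded_bodies P \<and> guarded_bodies Q)"
| "guarded_bodies (Bang P) = (guarded P \<and> guarded_bodies P)"
| "guarded_bodies P = True"

lemma wf_agent_guarded_bodies: "wf_agent C P \<Longrightarrow> guarded_bodies P"
proof (induction P)
  case (PCase cs)
  then show ?case by (fastforce simp: split_beta)
qed auto

lemma perm_list_nswap_binders:
  "length cs = length xs \<Longrightarrow> distinct cs \<Longrightarrow> set cs \<inter> set xs = {} \<Longrightarrow>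
   (\<forall>n\<in>set xs. perm_list nswap (zip cs xs) n \<in> set cs) \<and>
   (\<forall>n. n \<notin> set xs \<union> set cs \<longrightarrow> perm_list nswap (zip cs xs) n = n)"
proof (induction cs xs rule: list_induct2)
  case (Cons c cs x xs)
  then have IH: "\<forall>n\<in>set xs. perm_list nswap (zip cs xs) n \<in> set cs"
    "\<forall>n. n \<notin> set xs \<union> set cs \<longrightarrow> perm_list nswap (zip cs xs) n = n" by auto
  have cx: "c \<noteq> x" "c \<notin> set cs" "x \<notin> set cs" "c \<notin> set xs" using Cons.prems by auto
  show ?case
  proof (intro conjI ballI allI impI)
    fix n assume n: "n \<in> set (x # xs)"
    show "perm_list nswap (zip (c # cs) (x # xs)) n \<in> set (c # cs)"
    proof (cases "n \<in> set xs")
      case True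
      then have m: "perm_list nswap (zip cs xs) n \<in> set cs" using IH by auto
      then have "perm_list nswap (zip cs xs) n \<noteq> c" "perm_list nswap (zip cs xs) n \<noteq> x"
        using cx by auto
      then show ?thesis using m by simp
    next
      case False
      then show ?thesis using n IH(2) cx by auto
    qed
  next
    fix n assume "n \<notin> set (x # xs) \<union> set (c # cs)"
    then show "perm_list nswap (zip (c # cs) (x # xs)) n = n" using IH(2) by auto
  qed
qed simp

lemma perm_list_nswap_image_diff:
  assumes "length cs = length xs" "distinct cs" "set cs \<inter> set xs = {}" "set cs \<inter> (S - set xs) = {}"
  shows "perm_list nswap (zip cs xs) ` S - set cs = S - set xs"
proof
  note pl = perm_list_nswap_binders[OF assms(1-3)]
  show "perm_list nswap (zip cs xs) ` S - set cs \<subseteq> S - set xs"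
  proof
    fix y assume y: "y \<in> perm_list nswap (zip cs xs) ` S - set cs"
    then obtain n where n: "n \<in> S" "y = perm_list nswap (zip cs xs) n" by auto
    then have "n \<notin> set xs" using pl y by auto
    moreover then have "n \<notin> set cs" using assms(4) n by auto
    ultimately show "y \<in> S - set xs" using pl n by auto
  qed
  show "S - set xs \<subseteq> perm_list nswap (zip cs xs) ` S - set cs"
  proof
    fix n assume n: "n \<in> S - set xs"
    then have "n \<notin> set cs" using assms(4) by auto
    moreover then have "perm_list nswap (zip cs xs) n = n" using pl n by auto
    ultimately show "n \<in> perm_list nswap (zip cs xs) ` S - set cs" using n by (metis Diff_iff image_eqI)
  qed
qed

context psi
begin

lemma perm_agent_inv [simp]: "perm_agent C x y (perm_agent C x y P) = P"
proof (induction P)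
  case (PCase cs)
  have "(\<lambda>(\<phi>, P). (permC C x y \<phi>, perm_agent C x y P)) ((\<lambda>(\<phi>, P). (permC C x y \<phi>, perm_agent C x y P)) z) = z"
    if "z \<in> set cs" for z
    using PCase.IH[OF that] by (cases z) simp
  then show ?case by (simp add: map_idI)
qed auto

lemma fn_perm: "fn C (perm_agent C x y P) = nswap x y ` fn C P"
proof (induction P)
  case (Inp M xs N P)
  then show ?case by (simp add: suppT_swap image_Un nswap_image_diff[symmetric])
next
  case (PCase cs)
  have "fn C (perm_agent C x y Q) = nswap x y ` fn C Q" if "(\<phi>, Q) \<in> set cs" for \<phi> Q
    using PCase.IH[OF that] by simp
  then show ?case by (auto simp: suppC_swap image_Un image_UN split_beta)
next
  case (Res z P)
  then show ?case by (simp add: nswap_image_diff[of x y _ "{z}", simplified])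
qed (simp_all add: suppT_swap suppA_swap image_Un)

lemma guarded_perm [simp]: "guarded (perm_agent C x y P) = guarded P"
  by (induction P) (force simp: split_beta)+

lemma guarded_bodies_perm [simp]: "guarded_bodies (perm_agent C x y P) = guarded_bodies P"
  by (induction P) (force simp: split_beta)+

lemma suppT_perm_list: "suppT C (perm_list (permT C) ps N) = perm_list nswap ps ` suppT C N"
  by (induction ps) (auto simp: suppT_swap image_image)

lemma fn_perm_list: "fn C (perm_list (perm_agent C) ps P) = perm_list nswap ps ` fn C P"
  by (induction ps) (auto simp: fn_perm image_image)

lemma fn_PCase_cong:
  "list_all2 (\<lambda>(\<phi>, P) (\<phi>', Q). \<phi> = \<phi>' \<and> R P Q \<and> fn C P = fn C Q) cs ds \<Longrightarrow>
   fn C (PCase cs) = fn C (PCase ds)"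
  by (induction rule: list_all2_induct) (auto simp: split_beta)

lemma guarded_PCase_cong:
  "list_all2 (\<lambda>(\<phi>, P) (\<phi>', Q). \<phi> = \<phi>' \<and> R P Q \<and> (guarded P = guarded Q \<and> guarded_bodies P = guarded_bodies Q)) cs ds \<Longrightarrow>
   guarded (PCase cs) = guarded (PCase ds) \<and> guarded_bodies (PCase cs) = guarded_bodies (PCase ds)"
  by (induction rule: list_all2_induct) (auto simp: split_beta)

lemma alpha_fn: "alpha C P Q \<Longrightarrow> fn C P = fn C Q"
proof (induction rule: alpha.induct)
  case (3 ys xs cs M N P N' Q)
  let ?S = "suppT C N \<union> fn C P" and ?S' = "suppT C N' \<union> fn C Q"
  have "perm_list nswap (zip cs xs) ` ?S = perm_list nswap (zip cs ys) ` ?S'"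
    using 3(5,7) by (metis image_Un suppT_perm_list fn_perm_list)
  moreover have "perm_list nswap (zip cs xs) ` ?S - set cs = ?S - set xs"
    "perm_list nswap (zip cs ys) ` ?S' - set cs = ?S' - set ys"
    using 3(1-4) by (intro perm_list_nswap_image_diff; auto)+
  ultimately show ?case by simp
next
  case (4 cs ds)
  then show ?case by (rule fn_PCase_cong)
next
  case (5 c a b P Q)
  have "nswap a c ` fn C P = nswap b c ` fn C Q" using 5(3) by (simp add: fn_perm)
  moreover have "c \<noteq> a" "c \<noteq> b" "c \<notin> fn C P - {a}" "c \<notin> fn C Q - {b}" using 5(1) by auto
  ultimately have "fn C P - {a} = fn C Q - {b}" by (rule swap_image_eq_diff)
  then show ?case by simp
qed simp_all

lemma alpha_guarded_bodies: "alpha C P Q \<Longrightarrow> guarded_bodies P = guarded_bodies Q"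
proof -
  assume "alpha C P Q"
  then have "guarded P = guarded Q \<and> guarded_bodies P = guarded_bodies Q"
  proof (induction rule: alpha.induct)
    case (4 cs ds)
    then show ?case by (rule guarded_PCase_cong)
  qed simp_all
  then show ?thesis ..
qed

lemma alpha_has_frame: "alpha C P Q \<Longrightarrow> has_frame C Q bs \<Psi> \<Longrightarrow> has_frame C P bs \<Psi>"
proof (induction arbitrary: bs \<Psi> rule: alpha.induct)
  case (5 c a b P Q)
  obtain bs0 \<Psi>0 where F0: "has_frame C Q bs0 \<Psi>0" and chain: "(frame_alpha C)\<^sup>*\<^sup>* (b # bs0, \<Psi>0) (bs, \<Psi>)"
    using frame_Res[OF 5(4)] by blast
  let ?bs = "map (nswap a c) (map (nswap b c) bs0)" and ?\<Psi> = "permA C a c (permA C b c \<Psi>0)"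
  have "has_frame C (perm_agent C a c P) (map (nswap b c) bs0) (permA C b c \<Psi>0)"
    using 5(3) has_frame_swap[OF F0] by blast
  from has_frame_swap[OF this, of a c] have "has_frame C (Res a P) (a # ?bs) ?\<Psi>"
    by (simp add: has_frame.intros(8))
  moreover have "frame_alpha C (a # ?bs, ?\<Psi>) (b # bs0, \<Psi>0)"
  proof (rule frame_alpha.intros(2))
    have "frame_fn C (a # ?bs, ?\<Psi>) \<subseteq> fn C (Res a P)" "frame_fn C (b # bs0, \<Psi>0) \<subseteq> fn C (Res b Q)"
      using frame_fn_subset[OF \<open>has_frame C (Res a P) (a # ?bs) ?\<Psi>\<close>]
        frame_fn_subset[OF has_frame.intros(8)[OF F0]]
      by (simp_all add: frame_fn_def)
    then show "c \<notin> {a, b} \<union> frame_fn C (a # ?bs, ?\<Psi>) \<union> frame_fn C (b # bs0, \<Psi>0)"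
      using 5(1) by blast
    show "frame_alpha C (map (nswap a c) ?bs, permA C a c ?\<Psi>) (map (nswap b c) bs0, permA C b c \<Psi>0)"
      using frame_alpha_refl by (simp only: map_nswap_nswap permA_inv)
  qed
  ultimately have "has_frame C (Res a P) (b # bs0) \<Psi>0" by (rule has_frame.intros(9))
  then show ?case using has_frame_star[OF chain] by simp
next
  case (6 P P' Q Q')
  obtain b1 \<Psi>1 b2 \<Psi>2 where "par_frames C P' b1 \<Psi>1 Q' b2 \<Psi>2"
      and chain: "(frame_alpha C)\<^sup>*\<^sup>* (b1 @ b2, acomp C \<Psi>1 \<Psi>2) (bs, \<Psi>)"
    using frame_Par[OF 6(5)] by blast
  then have "par_frames C P b1 \<Psi>1 Q b2 \<Psi>2" using 6(3,4) by (auto simp: par_frames_def)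
  then show ?case using has_frame_star[OF chain] par_frames_has_frame by fastforce
qed (auto dest!: frame_frameless intro: has_frame.intros)

end

section \<open>The induction on transitions\<close>

text \<open>fresh_subject C \<Psi> P K: in the environment \<Psi>, every frame of P whose binders avoid the
  environment provides a channel equivalent to K through a term avoiding any given finite
  set B of names fresh for P.  This is the invariant established by induction on the
  transition, with K the subject of the action.\<close>
definition fresh_subject :: "('t, 'c, 'a, 'z) psi_scheme \<Rightarrow> 'a \<Rightarrow> ('t, 'c, 'a) agent \<Rightarrow> 't \<Rightarrow> bool" where
  "fresh_subject C \<Psi> P K \<longleftrightarrow> (\<forall>B bs A. finite B \<longrightarrow> B \<inter> fn C P = {} \<longrightarrow> has_frame C P bs A \<longrightarrow>
     set bs \<inter> env_names C \<Psi> K B = {} \<longrightarrow> fresh_chan C \<Psi> K B A)"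

lemma fresh_subjectD:
  "fresh_subject C \<Psi> P K \<Longrightarrow> finite B \<Longrightarrow> B \<inter> fn C P = {} \<Longrightarrow> has_frame C P bs A \<Longrightarrow>
   set bs \<inter> env_names C \<Psi> K B = {} \<Longrightarrow> fresh_chan C \<Psi> K B A"
  by (simp add: fresh_subject_def)

context psi
begin

text \<open>By frame invariance it suffices to exhibit, for each B, a single frame whose binders
  avoid \<Psi> and K.\<close>
lemma fresh_subjectI:
  assumes "\<And>B. finite B \<Longrightarrow> B \<inter> fn C P = {} \<Longrightarrow>
    \<exists>bs A. has_frame C P bs A \<and> set bs \<inter> (suppA C \<Psi> \<union> suppT C K) = {} \<and> fresh_chan C \<Psi> K B A"
  shows "fresh_subject C \<Psi> P K"
  unfolding fresh_subject_def using assms fresh_chan_transfer by metis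

text \<open>Prefixes: the subject M of the prefix itself is the witness.\<close>
lemma fresh_subject_prefix:
  assumes "has_frame C P [] (aunit C)" "suppT C M \<subseteq> fn C P" "entails C \<Psi> (chan_eq C M K)"
  shows "fresh_subject C \<Psi> P K"
proof (rule fresh_subjectI)
  fix B assume "B \<inter> fn C P = {}"
  then have "fresh_chan C \<Psi> K B (aunit C)"
    using assms(2,3) ae_ent[OF ae_sym[OF ae_unit]] unfolding fresh_chan_def by blast
  then show "\<exists>bs A. has_frame C P bs A \<and> set bs \<inter> (suppA C \<Psi> \<union> suppT C K) = {} \<and> fresh_chan C \<Psi> K B A"
    using assms(1) by fastforce
qed

text \<open>Case and replication: the agent has the unit frame, and so has, up to equivalence,
  the guarded agent Q that performs the transition.\<close>
lemma fresh_subject_frameless: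
  assumes IH: "fresh_subject C \<Psi> Q K" and "guarded Q" "fn C Q \<subseteq> fn C P" "frameless P"
  shows "fresh_subject C \<Psi> P K"
proof (rule fresh_subjectI)
  fix B assume fB: "finite B" and B: "B \<inter> fn C P = {}"
  obtain bs A where F: "has_frame C Q bs A" "set bs \<inter> env_names C \<Psi> K B = {}"
    using obtain_frame[OF finite_env_names[OF fB]] by blast
  have "fresh_chan C \<Psi> K B A"
    using fresh_subjectD[OF IH fB _ F] B assms(3) by blast
  then have "fresh_chan C \<Psi> K B (aunit C)"
    using fresh_chan_ae_frame guarded_frame_unit[OF F(1) assms(2)] by blast
  moreover have "has_frame C P [] (aunit C)"
    using assms(4) by (cases P) (auto intro: has_frame.intros)
  ultimately show "\<exists>bs A. has_frame C P bs A \<and> set bs \<inter> (suppA C \<Psi> \<union> suppT C K) = {} \<and> fresh_chan C \<Psi> K B A"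
    by fastforce
qed

text \<open>Parallel composition, left component acting: a frame of P with fresh binders is
  combined with the given frame of Q, whose assertion was part of the environment of P.\<close>
lemma fresh_subject_Par_left:
  assumes FQ: "has_frame C Q bQ \<Psi>Q" and bQ: "set bQ \<inter> (suppA C \<Psi> \<union> fn C P \<union> suppT C K) = {}"
    and IH: "fresh_subject C (acomp C \<Psi>Q \<Psi>) P K"
  shows "fresh_subject C \<Psi> (Par P Q) K"
proof (rule fresh_subjectI)
  fix B assume fB: "finite B" and B: "B \<inter> fn C (Par P Q) = {}"
  let ?Y = "suppA C \<Psi> \<union> suppA C \<Psi>Q \<union> suppT C K \<union> B \<union> set bQ \<union> fn C Q"
  obtain bP \<Psi>P where FP: "has_frame C P bP \<Psi>P" "set bP \<inter> ?Y = {}"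
    using obtain_frame[of ?Y] fB by auto
  have "set bP \<inter> env_names C (acomp C \<Psi>Q \<Psi>) K B = {}"
    using env_names_comp[of \<Psi>Q \<Psi> K B] FP(2) by (auto simp: env_names_def)
  then have "fresh_chan C (acomp C \<Psi>Q \<Psi>) K B \<Psi>P"
    using fresh_subjectD[OF IH fB _ FP(1)] B by auto
  then have "fresh_chan C \<Psi> K B (acomp C \<Psi>P \<Psi>Q)"
    using fresh_chan_ae_env[OF ae_comm] fresh_chan_comp_left by blast
  moreover have "par_frames C P bP \<Psi>P Q bQ \<Psi>Q"
    using FP FQ bQ frame_fn_subset[OF FP(1)] by (auto simp: par_frames_def)
  ultimately show "\<exists>bs A. has_frame C (Par P Q) bs A \<and> set bs \<inter> (suppA C \<Psi> \<union> suppT C K) = {} \<and>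
      fresh_chan C \<Psi> K B A"
    using par_frames_has_frame FP(2) bQ by fastforce
qed

lemma fresh_subject_Par_right:
  assumes FP: "has_frame C P bP \<Psi>P" and bP: "set bP \<inter> (suppA C \<Psi> \<union> fn C Q \<union> suppT C K) = {}"
    and IH: "fresh_subject C (acomp C \<Psi>P \<Psi>) Q K"
  shows "fresh_subject C \<Psi> (Par P Q) K"
proof (rule fresh_subjectI)
  fix B assume fB: "finite B" and B: "B \<inter> fn C (Par P Q) = {}"
  let ?Y = "suppA C \<Psi> \<union> suppA C \<Psi>P \<union> suppT C K \<union> B \<union> set bP \<union> fn C P"
  obtain bQ \<Psi>Q where FQ: "has_frame C Q bQ \<Psi>Q" "set bQ \<inter> ?Y = {}"
    using obtain_frame[of ?Y] fB by auto
  have "set bQ \<inter> env_names C (acomp C \<Psi>P \<Psi>) K B = {}"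
    using env_names_comp[of \<Psi>P \<Psi> K B] FQ(2) by (auto simp: env_names_def)
  then have "fresh_chan C (acomp C \<Psi>P \<Psi>) K B \<Psi>Q"
    using fresh_subjectD[OF IH fB _ FQ(1)] B by auto
  then have "fresh_chan C \<Psi> K B (acomp C \<Psi>P \<Psi>Q)"
    using fresh_chan_ae_env[OF ae_comm] fresh_chan_comp_right by blast
  moreover have "par_frames C P bP \<Psi>P Q bQ \<Psi>Q"
    using FP FQ bP frame_fn_subset[OF FQ(1)] by (auto simp: par_frames_def)
  ultimately show "\<exists>bs A. has_frame C (Par P Q) bs A \<and> set bs \<inter> (suppA C \<Psi> \<union> suppT C K) = {} \<and>
      fresh_chan C \<Psi> K B A"
    using par_frames_has_frame FQ(2) bP by fastforce
qed

text \<open>Restriction (rules Scope and Open): the witness M obtained for Q avoids B - {b} but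
  may contain b.  Alpha-converting the frame binder b to a fresh b' and applying the same
  swapping to M yields a witness avoiding B.\<close>
lemma fresh_subject_Res:
  assumes IH: "fresh_subject C \<Psi> Q K" and b: "b \<notin> suppA C \<Psi>" "b \<notin> suppT C K"
  shows "fresh_subject C \<Psi> (Res b Q) K"
proof (rule fresh_subjectI)
  fix B assume fB: "finite B" and B: "B \<inter> fn C (Res b Q) = {}"
  obtain bs A where F: "has_frame C Q bs A" "set bs \<inter> (env_names C \<Psi> K B \<union> {b}) = {}"
    using obtain_frame[of "env_names C \<Psi> K B \<union> {b}"] fB finite_env_names by auto
  have "(B - {b}) \<inter> fn C Q = {}" "set bs \<inter> env_names C \<Psi> K (B - {b}) = {}"
    using B F(2) by (auto simp: env_names_def)
  then have "fresh_chan C \<Psi> K (B - {b}) A"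
    using fresh_subjectD[OF IH _ _ F(1)] fB by blast
  then obtain M where M: "suppT C M \<inter> (B - {b}) = {}" "entails C (acomp C \<Psi> A) (chan_eq C M K)"
    unfolding fresh_chan_def by blast
  have "finite (env_names C \<Psi> K B \<union> {b} \<union> set bs \<union> suppA C A \<union> suppT C M)"
    using fB finite_env_names by simp
  then obtain b' where b': "b' \<notin> env_names C \<Psi> K B \<union> {b} \<union> set bs \<union> suppA C A \<union> suppT C M"
    by (rule obtain_fresh)
  have "map (nswap b b') bs = bs"
    using F(2) b' by (intro map_idI nswap_other) auto
  then have alpha: "frame_alpha C (b # bs, A) (b' # bs, permA C b b' A)"
    using frame_alpha_rename_bound[of b "b # bs" b' A] b' by simp
  have "permA C b b' \<Psi> = \<Psi>" "permT C b b' K = K"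
    using b b' by (auto simp: env_names_def intro: permA_fresh permT_fresh)
  then have "entails C (acomp C \<Psi> (permA C b b' A)) (chan_eq C (permT C b b' M) K)"
    using ent_swap[OF M(2), of b b'] by (simp add: eqv_comp eqv_chan)
  moreover have "suppT C (permT C b b' M) \<inter> B = {}"
    using M(1) b' by (auto simp: suppT_swap mem_nswap_image env_names_def nswap_def split: if_splits)
  ultimately have "fresh_chan C \<Psi> K B (permA C b b' A)"
    unfolding fresh_chan_def by blast
  moreover have "has_frame C (Res b Q) (b' # bs) (permA C b b' A)"
    using has_frame.intros(9)[OF has_frame.intros(8)[OF F(1)] alpha] .
  moreover have "set (b' # bs) \<inter> (suppA C \<Psi> \<union> suppT C K) = {}"
    using F(2) b' by (auto simp: env_names_def)
  ultimately show "\<exists>bs A. has_frame C (Res b Q) bs A \<and> set bs \<inter> (suppA C \<Psi> \<union> suppT C K) = {} \<and>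
      fresh_chan C \<Psi> K B A"
    by blast
qed

text \<open>Alpha-conversion of the agent: free names and frames are preserved.\<close>
lemma fresh_subject_alpha:
  assumes "alpha C P Q" and IH: "fresh_subject C \<Psi> Q K"
  shows "fresh_subject C \<Psi> P K"
proof (rule fresh_subjectI)
  fix B assume fB: "finite B" and B: "B \<inter> fn C P = {}"
  obtain bs A where F: "has_frame C Q bs A" "set bs \<inter> env_names C \<Psi> K B = {}"
    using obtain_frame[OF finite_env_names[OF fB]] by blast
  have "fresh_chan C \<Psi> K B A"
    using fresh_subjectD[OF IH fB _ F] B alpha_fn[OF assms(1)] by simp
  then show "\<exists>bs A. has_frame C P bs A \<and> set bs \<inter> (suppA C \<Psi> \<union> suppT C K) = {} \<and> fresh_chan C \<Psi> K B A"
    using alpha_has_frame[OF assms(1) F(1)] F(2) by (auto simp: env_names_def)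
qed

lemma subj_names_act: "\<alpha> \<noteq> Tau \<Longrightarrow> suppT C (subj \<alpha>) \<subseteq> names_act C \<alpha>"
  by (cases \<alpha>) auto

lemma res_alpha_subj: "res_alpha C (\<alpha>1, P1) (\<alpha>, P') \<Longrightarrow> \<alpha> \<noteq> Tau \<Longrightarrow> \<alpha>1 \<noteq> Tau \<and> subj \<alpha>1 = subj \<alpha>"
  by (cases \<alpha>1; cases \<alpha>) auto

lemma transition_fresh_subject:
  "transition C \<Psi> P \<alpha> P' \<Longrightarrow> \<alpha> \<noteq> Tau \<Longrightarrow> guarded_bodies P \<Longrightarrow> fresh_subject C \<Psi> P (subj \<alpha>)"
proof (induction rule: transition.induct)
  case (In \<Psi> M K Ls ys P P' N)
  then show ?case by (intro fresh_subject_prefix) (auto intro: has_frame.intros)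
next
  case (Out \<Psi> M K N P)
  then show ?case by (intro fresh_subject_prefix) (auto intro: has_frame.intros)
next
  case (Case \<phi> P cs \<Psi> \<alpha> P')
  have "guarded P" "guarded_bodies P" "fn C P \<subseteq> fn C (PCase cs)"
    using Case.prems(2) Case.hyps(1) by fastforce+
  then show ?case
    using fresh_subject_frameless Case.IH[OF Case.prems(1)] by simp
next
  case (Par1 Q bQ \<Psi>Q \<Psi> P \<alpha> P')
  then show ?case using subj_names_act[of \<alpha>] by (intro fresh_subject_Par_left) auto
next
  case (Par2 P bP \<Psi>P \<Psi> Q \<alpha> Q')
  then show ?case using subj_names_act[of \<alpha>] by (intro fresh_subject_Par_right) auto
next
  case (Scope \<Psi> P \<alpha> P' b)
  then show ?case using subj_names_act[of \<alpha>] by (intro fresh_subject_Res) auto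
next
  case (Open \<Psi> P M as1 as2 N P' b)
  then show ?case by (intro fresh_subject_Res) auto
next
  case (Rep \<Psi> P \<alpha> P')
  have "guarded (Par P (Bang P))" "guarded_bodies (Par P (Bang P))"
    "fn C (Par P (Bang P)) \<subseteq> fn C (Bang P)"
    using Rep.prems(2) by auto
  then show ?case
    using fresh_subject_frameless Rep.IH[OF Rep.prems(1)] by simp
next
  case (Alpha P P1 \<Psi> \<alpha>1 P1' \<alpha> P')
  then show ?case
    using res_alpha_subj[OF Alpha(3)] alpha_guarded_bodies[OF Alpha(1)]
    by (intro fresh_subject_alpha[OF Alpha(1)]) auto
qed simp_all

end

theorem mainTheorem5:
  fixes C :: "('t, 'c, 'a) psi"
  assumes "psi_calculus C"
    and "wf_agent C P"
    and "finite B" and "B \<inter> fn C P = {}"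
    and "transition C \<Psi> P \<alpha> P'" and "\<alpha> \<noteq> Tau"
    and "has_frame C P bP \<Psi>P"
    and "set bP \<inter> (suppA C \<Psi> \<union> fn C P \<union> suppT C (subj \<alpha>) \<union> B) = {}"
  shows "\<exists>M. suppT C M \<inter> B = {} \<and> entails C (acomp C \<Psi> \<Psi>P) (chan_eq C M (subj \<alpha>))"
proof -
  interpret psi C using assms(1) by unfold_locales
  have invariant: "fresh_subject C \<Psi> P (subj \<alpha>)"
    using transition_fresh_subject[OF assms(5,6) wf_agent_guarded_bodies[OF assms(2)]] .
  have "set bP \<inter> env_names C \<Psi> (subj \<alpha>) B = {}"
    using assms(8) by (auto simp: env_names_def)
  then have "fresh_chan C \<Psi> (subj \<alpha>) B \<Psi>P"
    using fresh_subjectD[OF invariant assms(3,4,7)] by blast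
  then show ?thesis unfolding fresh_chan_def .
qed

end
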